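(* Let $m$ be a positive integer. For $r\ge 0$ let $f_r=[\psi_1,\psi_1^*]\cdots[\psi_r,\psi_r^*]\in\mathrm{Cl}_q(nm,k)$ (so $f_0=1$), where $[A,B]=AB-BA$. Let $\phi_a$ denote either $\psi_a$ or $\psi_a^*$. There is a map $\Gamma_q\colon \mathrm{Cl}_q(n,k)^{\otimes m}\to \mathrm{Cl}_q(nm,k)$ (ordinary tensor product of algebras over $\mathbb{k}$) determined by \[ 1\otimes\cdots\otimes\phi_a\otimes\cdots\otimes 1\mapsto f_{(j-1)n}\,\phi_{a+(j-1)n},\qquad 1\otimes\cdots\otimes\omega_a\otimes\cdots\otimes1\mapsto \omega_{a+(j-1)n}, \] where on the left $\phi_a$, resp. $\omega_a$, sits in the $j$th tensor factor ($1\le j\le m$, $1\le a\le n$), and it is an isomorphism of $\mathbb{Z}^{nm}$-graded algebras. Its inverse $\Gamma_q^{-1}\colon \mathrm{Cl}_q(nm,k)\to\mathrm{Cl}_q(n,k)^{\otimes m}$ is given by \[ \phi_{a+(j-1)n}\mapsto f_n\otimes\cdots\otimes f_n\otimes\phi_a\otimes1\otimes\cdots\otimes1,\qquad \omega_{a+(j-1)n}\mapsto 1\otimes\cdots\otimes\omega_a\otimes\cdots\otimes 1, \] where $\phi_a$, resp. $\omega_a$, is in the $j$th factor (and $f_n\in\mathrm{Cl}_q(n,k)$ occupies the first $j-1$ factors). In particular, $\Gamma_q(1\otimes\cdots\otimes\phi_a\phi_b\otimes\cdots\otimes1)=\phi_{a+(j-1)n}\phi_{b+(j-1)n}$ when $\phi_a\phi_b$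 is in the $j$th factor.
   Context: Let $\mathbb{k}$ be a field of characteristic different from $2$, let $q\in\mathbb{k}^\times$, and let $N,k$ be positive integers. The quantum Clifford algebra $\mathrm{Cl}_q(N,k)$ is the unital associative $\mathbb{k}$-algebra generated by $\psi_a,\psi_a^*,\omega_a,\omega_a^{-1}$ for $a\in\{1,\dots,N\}$, subject to the relations (for all $a,b\in\{1,\dots,N\}$): $\omega_a\omega_b=\omega_b\omega_a$; $\omega_a\omega_a^{-1}=1$; $\omega_a\psi_b=q^{\delta_{ab}}\psi_b\omega_a$; $\omega_a\psi_b^*=q^{-\delta_{ab}}\psi_b^*\omega_a$; $\psi_a\psi_b+\psi_b\psi_a=0$; $\psi_a^*\psi_b^*+\psi_b^*\psi_a^*=0$; $\psi_a\psi_a^*+q^k\psi_a^*\psi_a=\omega_a^{-k}$; $\psi_a\psi_a^*+q^{-k}\psi_a^*\psi_a=\omega_a^{k}$; and $\psi_a\psi_b^*+\psi_b^*\psi_a=0$ if $a\neq b$. It carries a $\mathbb{Z}^N$-grading with $\deg\psi_a=e_a$, $\deg\psi_a^*=-e_a$, $\deg\omega_a=0$ ($e_a$ the standard basis vector). The theorem uses $N=n$ and $N=nm$; $\mathrm{Cl}_q(n,k)^{\otimes m}$ is $\mathbb{Z}^{nm}$-graded by letting the $j$th factor's degree $e_a$ correspond to $e_{a+(j-1)n}$. *)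

theory Defs
  imports "HOL-Library.Poly_Mapping" "HOL-Algebra.QuotRing"
begin

datatype 'g word = Wd "'g list"

fun letters :: "'g word \<Rightarrow> 'g list" where "letters (Wd xs) = xs"

instantiation word :: (type) monoid_add
begin
definition zero_word_def: "0 = Wd []"
definition plus_word_def: "u + v = Wd (letters u @ letters v)"
instance
proof
  fix a b c :: "'a word"
  show "a + b + c = a + (b + c)" by (simp add: plus_word_def)
  show "0 + a = a" by (cases a) (simp add: plus_word_def zero_word_def)
  show "a + 0 = a" by (cases a) (simp add: plus_word_def zero_word_def)
qed
end

text \<open>Elements: finitely supported k-linear combinations of words, multiplication by
  concatenation of words (the monoid algebra of the free monoid).\<close>

type_synonym ('g,'k) fa = "'g word \<Rightarrow>\<^sub>0 'k"

definition FreeAlg :: "'g set \<Rightarrow> ('g,'k::field) fa ring" where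
  "FreeAlg G = \<lparr>carrier = {p. \<forall>w\<in>Poly_Mapping.keys p. set (letters w) \<subseteq> G},
                mult = (*), one = 1, zero = 0, add = (+)\<rparr>"

definition gen :: "'g \<Rightarrow> ('g,'k::field) fa" where
  "gen g = Poly_Mapping.single (Wd [g]) 1"

definition scal :: "'k::field \<Rightarrow> ('g,'k) fa" where
  "scal c = Poly_Mapping.single (Wd []) c"

definition free_hom :: "('g \<Rightarrow> ('h,'k::field) fa) \<Rightarrow> ('g,'k) fa \<Rightarrow> ('h,'k) fa" where
  "free_hom h p = (\<Sum>w\<in>Poly_Mapping.keys p. scal (Poly_Mapping.lookup p w) * prod_list (map h (letters w)))"

definition Presented :: "'g set \<Rightarrow> ('g,'k::field) fa set \<Rightarrow> ('g,'k) fa set ring" where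
  "Presented G Rs = FreeAlg G Quot genideal (FreeAlg G) Rs"

definition cls :: "'g set \<Rightarrow> ('g,'k::field) fa set \<Rightarrow> ('g,'k) fa \<Rightarrow> ('g,'k) fa set" where
  "cls G Rs p = genideal (FreeAlg G) Rs +>\<^bsub>FreeAlg G\<^esub> p"

datatype cgen = Psi nat | PsiS nat | Om nat | OmI nat

definition cgens :: "nat \<Rightarrow> cgen set" where
  "cgens N = (\<Union>a\<in>{1..N}. {Psi a, PsiS a, Om a, OmI a})"

definition cl_rels :: "'k::field \<Rightarrow> nat \<Rightarrow> nat \<Rightarrow> (cgen,'k) fa set" where
  "cl_rels q N k = (\<Union>a\<in>{1..N}. \<Union>b\<in>{1..N}.
     { gen (Om a) * gen (Om b) - gen (Om b) * gen (Om a),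
       gen (Om a) * gen (OmI a) - 1,
       gen (OmI a) * gen (Om a) - 1,
       gen (Om a) * gen (Psi b) - scal (if a = b then q else 1) * gen (Psi b) * gen (Om a),
       gen (Om a) * gen (PsiS b) - scal (if a = b then inverse q else 1) * gen (PsiS b) * gen (Om a),
       gen (Psi a) * gen (Psi b) + gen (Psi b) * gen (Psi a),
       gen (PsiS a) * gen (PsiS b) + gen (PsiS b) * gen (PsiS a),
       gen (Psi a) * gen (PsiS a) + scal (q ^ k) * gen (PsiS a) * gen (Psi a) - gen (OmI a) ^ k,
       gen (Psi a) * gen (PsiS a) + scal (inverse q ^ k) * gen (PsiS a) * gen (Psi a) - gen (Om a) ^ k }
     \<union> (if a \<noteq> b then {gen (Psi a) * gen (PsiS b) + gen (PsiS b) * gen (Psi a)} else {}))"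

definition Cl :: "'k::field \<Rightarrow> nat \<Rightarrow> nat \<Rightarrow> (cgen,'k) fa set ring" where
  "Cl q N k = Presented (cgens N) (cl_rels q N k)"

definition clcls :: "'k::field \<Rightarrow> nat \<Rightarrow> nat \<Rightarrow> (cgen,'k) fa \<Rightarrow> (cgen,'k) fa set" where
  "clcls q N k = cls (cgens N) (cl_rels q N k)"

text \<open>Presented by the generators (j,g) of the j-th factor (1 \<le> j \<le> m), the relations of
  each factor, and the relations that elements of distinct factors commute.\<close>

definition tgens :: "nat \<Rightarrow> nat \<Rightarrow> (nat \<times> cgen) set" where
  "tgens n m = {(j,g). j \<in> {1..m} \<and> g \<in> cgens n}"

definition t_rels :: "'k::field \<Rightarrow> nat \<Rightarrow> nat \<Rightarrow> nat \<Rightarrow> (nat \<times> cgen,'k) fa set" where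
  "t_rels q n m k =
     (\<Union>j\<in>{1..m}. free_hom (\<lambda>g. gen (j,g)) ` cl_rels q n k)
   \<union> {gen (j,g) * gen (j',g') - gen (j',g') * gen (j,g) | j j' g g'.
        j \<in> {1..m} \<and> j' \<in> {1..m} \<and> j \<noteq> j' \<and> g \<in> cgens n \<and> g' \<in> cgens n}"

definition Tens :: "'k::field \<Rightarrow> nat \<Rightarrow> nat \<Rightarrow> nat \<Rightarrow> (nat \<times> cgen,'k) fa set ring" where
  "Tens q n m k = Presented (tgens n m) (t_rels q n m k)"

definition tcls :: "'k::field \<Rightarrow> nat \<Rightarrow> nat \<Rightarrow> nat \<Rightarrow> (nat \<times> cgen,'k) fa \<Rightarrow> (nat \<times> cgen,'k) fa set" where
  "tcls q n m k = cls (tgens n m) (t_rels q n m k)"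

text \<open>The element 1 \<otimes> .. \<otimes> x \<otimes> .. \<otimes> 1 with x in the j-th factor (on representatives).\<close>
definition in_factor :: "nat \<Rightarrow> (cgen,'k::field) fa \<Rightarrow> (nat \<times> cgen,'k) fa" where
  "in_factor j x = free_hom (\<lambda>g. gen (j,g)) x"

fun shift :: "nat \<Rightarrow> cgen \<Rightarrow> cgen" where
  "shift s (Psi a) = Psi (a + s)" | "shift s (PsiS a) = PsiS (a + s)"
| "shift s (Om a) = Om (a + s)" | "shift s (OmI a) = OmI (a + s)"

fun cdeg :: "cgen \<Rightarrow> nat \<Rightarrow> int" where
  "cdeg (Psi a) = (\<lambda>i. if i = a then 1 else 0)"
| "cdeg (PsiS a) = (\<lambda>i. if i = a then -1 else 0)"
| "cdeg (Om a) = (\<lambda>i. 0)" | "cdeg (OmI a) = (\<lambda>i. 0)"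

definition tdeg :: "nat \<Rightarrow> nat \<times> cgen \<Rightarrow> nat \<Rightarrow> int" where
  "tdeg n jg = cdeg (shift ((fst jg - 1) * n) (snd jg))"

definition wdeg :: "('g \<Rightarrow> nat \<Rightarrow> int) \<Rightarrow> 'g word \<Rightarrow> nat \<Rightarrow> int" where
  "wdeg dg w = (\<lambda>i. sum_list (map (\<lambda>g. dg g i) (letters w)))"

definition homog :: "('g \<Rightarrow> nat \<Rightarrow> int) \<Rightarrow> (nat \<Rightarrow> int) \<Rightarrow> ('g,'k::field) fa \<Rightarrow> bool" where
  "homog dg d p \<longleftrightarrow> (\<forall>w\<in>Poly_Mapping.keys p. wdeg dg w = d)"

definition graded_map ::
  "'g set \<Rightarrow> ('g,'k::field) fa set \<Rightarrow> ('g \<Rightarrow> nat \<Rightarrow> int) \<Rightarrow>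
   'h set \<Rightarrow> ('h,'k) fa set \<Rightarrow> ('h \<Rightarrow> nat \<Rightarrow> int) \<Rightarrow>
   (('g,'k) fa set \<Rightarrow> ('h,'k) fa set) \<Rightarrow> bool" where
  "graded_map G1 R1 d1 G2 R2 d2 F \<longleftrightarrow>
     (\<forall>d p. p \<in> carrier (FreeAlg G1) \<and> homog d1 d p \<longrightarrow>
        (\<exists>p'. p' \<in> carrier (FreeAlg G2) \<and> homog d2 d p' \<and> F (cls G1 R1 p) = cls G2 R2 p'))"

definition fr :: "nat \<Rightarrow> (cgen,'k::field) fa" where
  "fr r = prod_list (map (\<lambda>i. gen (Psi i) * gen (PsiS i) - gen (PsiS i) * gen (Psi i)) [1..<r+1])"

end

(* Both maps are given on generators, so it suffices to check that each respects the defining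
   relations of its source and that the two composites fix every generator modulo relations.
   The key elements are c_i = psi_i psi_i^* - psi_i^* psi_i.  The relations
   psi_i psi_i^* + q^(+-k) psi_i^* psi_i = omega_i^(-+k) together with psi_i^2 = psi_i^*^2 = 0
   give c_i^2 = 1; moreover c_i commutes with every omega and with psi_l, psi_l^* for l ~= i,
   and anticommutes with psi_i, psi_i^*.  Hence f_r = c_1 ... c_r is an involution that
   anticommutes with the odd generators of index at most r and commutes with all others.
   Multiplying the odd generators of the j-th block by f_((j-1)n) therefore leaves products
   within a block unchanged, while odd generators of different blocks now commute; in the
   tensor power, multiplication by f_n (x) ... (x) f_n (j - 1 factors) reverses this. *)

theory Submission
  imports Defs
begin


section \<open>Free algebras\<close>

lemma letters_plus [simp]: "letters (u + v) = letters u @ letters v"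
  by (simp add: plus_word_def)

lemma letters_zero [simp]: "letters 0 = []"
  by (simp add: zero_word_def)

lemma Wd_Nil: "Wd [] = 0"
  by (simp add: zero_word_def)

lemma Wd_Cons: "Wd (x # xs) = Wd [x] + Wd xs"
  by (simp add: plus_word_def)

lemma scal_0 [simp]: "scal 0 = 0"
  by (simp add: scal_def)

lemma scal_1 [simp]: "scal 1 = 1"
  by (simp add: scal_def Wd_Nil)

lemma scal_add: "scal (a + b) = scal a + scal b"
  by (simp add: scal_def single_add)

lemma scal_mult: "scal (a * b) = scal a * scal b"
  by (simp add: scal_def mult_single Wd_Nil)

lemma poly_mapping_expansion:
  "p = (\<Sum>w\<in>Poly_Mapping.keys p. Poly_Mapping.single w (Poly_Mapping.lookup p w))"
proof -
  have "finite I \<Longrightarrow> Poly_Mapping.lookup (\<Sum>w\<in>I. Poly_Mapping.single w (Poly_Mapping.lookup p w)) v =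
          (if v \<in> I then Poly_Mapping.lookup p v else 0)" for I v
    by (induction I rule: finite_induct) (auto simp: lookup_single lookup_add when_def)
  then show ?thesis
    by (intro poly_mapping_eqI) (fastforce simp: in_keys_iff)
qed

lemma prod_list_map_gen: "prod_list (map gen xs) = (Poly_Mapping.single (Wd xs) 1 :: ('g,'k::field) fa)"
proof (induction xs)
  case (Cons x xs)
  then show ?case by (simp add: gen_def mult_single Wd_Cons[of x xs])
qed (simp add: Wd_Nil)

lemma single_eq_scal_mult_word:
  "(Poly_Mapping.single w c :: ('g,'k::field) fa) = scal c * prod_list (map gen (letters w))"
  by (cases w) (simp add: prod_list_map_gen scal_def mult_single Wd_Nil)

lemma scal_commute: "scal c * (x :: ('g,'k::field) fa) = x * scal c"
proof -
  have "scal c * x = (\<Sum>w\<in>Poly_Mapping.keys x. scal c * Poly_Mapping.single w (Poly_Mapping.lookup x w))"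
    by (subst poly_mapping_expansion[of x]) (simp add: sum_distrib_left)
  also have "\<dots> = (\<Sum>w\<in>Poly_Mapping.keys x. Poly_Mapping.single w (Poly_Mapping.lookup x w) * scal c)"
    by (rule sum.cong) (simp_all add: scal_def mult_single mult.commute Wd_Nil)
  also have "\<dots> = x * scal c"
    by (subst (3) poly_mapping_expansion[of x]) (simp add: sum_distrib_right)
  finally show ?thesis .
qed

lemma mult_scal_left_commute: "x * (scal c * y) = scal c * (x * (y :: ('g,'k::field) fa))"
  by (metis mult.assoc scal_commute)

abbreviation eval_word :: "('g \<Rightarrow> ('h,'k::field) fa) \<Rightarrow> 'g word \<Rightarrow> ('h,'k) fa" where
  "eval_word h w \<equiv> prod_list (map h (letters w))"

lemma free_hom_sum_superset:
  assumes "finite S" "Poly_Mapping.keys p \<subseteq> S"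
  shows "free_hom h p = (\<Sum>w\<in>S. scal (Poly_Mapping.lookup p w) * eval_word h w)"
  unfolding free_hom_def
  by (rule sum.mono_neutral_left) (use assms in \<open>auto simp: in_keys_iff\<close>)

lemma free_hom_zero [simp]: "free_hom h 0 = 0"
  by (simp add: free_hom_def)

lemma free_hom_add: "free_hom h (p + q) = free_hom h p + free_hom h q"
proof -
  let ?S = "Poly_Mapping.keys p \<union> Poly_Mapping.keys q"
  have "free_hom h (p + q) = (\<Sum>w\<in>?S. scal (Poly_Mapping.lookup (p + q) w) * eval_word h w)"
    by (rule free_hom_sum_superset) (use keys_add[of p q] in auto)
  also have "\<dots> = (\<Sum>w\<in>?S. scal (Poly_Mapping.lookup p w) * eval_word h w) +
                    (\<Sum>w\<in>?S. scal (Poly_Mapping.lookup q w) * eval_word h w)"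
    by (simp add: lookup_add scal_add distrib_right sum.distrib)
  also have "\<dots> = free_hom h p + free_hom h q"
    by (simp add: free_hom_sum_superset[symmetric])
  finally show ?thesis .
qed

lemma free_hom_single: "free_hom h (Poly_Mapping.single w c) = scal c * eval_word h w"
  by (cases "c = 0") (simp_all add: free_hom_def)

lemma free_hom_sum: "free_hom h (sum f A) = (\<Sum>a\<in>A. free_hom h (f a))"
  by (induction A rule: infinite_finite_induct) (simp_all add: free_hom_add)

lemma free_hom_uminus: "free_hom h (- p) = - free_hom h p"
  using free_hom_add[of h "- p" p] by (simp add: eq_neg_iff_add_eq_0)

lemma free_hom_diff: "free_hom h (p - q) = free_hom h p - free_hom h q"
  by (simp only: diff_conv_add_uminus free_hom_add free_hom_uminus)

lemma free_hom_mult: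
  fixes h :: "'g \<Rightarrow> ('h,'k::field) fa"
  shows "free_hom h (p * q) = free_hom h p * free_hom h q"
proof -
  have split: "scal (a * b) * (X * Y) = (scal a * X) * (scal b * Y)" for a b and X Y :: "('h,'k) fa"
  proof -
    have "scal (a * b) * (X * Y) = scal a * ((scal b * X) * Y)" by (simp add: scal_mult mult.assoc)
    also have "\<dots> = scal a * ((X * scal b) * Y)" by (simp add: scal_commute)
    finally show ?thesis by (simp add: mult.assoc)
  qed
  have "p * q = (\<Sum>v\<in>Poly_Mapping.keys q. \<Sum>u\<in>Poly_Mapping.keys p.
            Poly_Mapping.single u (Poly_Mapping.lookup p u) * Poly_Mapping.single v (Poly_Mapping.lookup q v))"
  proof -
    have "p * q = (\<Sum>u\<in>Poly_Mapping.keys p. Poly_Mapping.single u (Poly_Mapping.lookup p u)) *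
                  (\<Sum>v\<in>Poly_Mapping.keys q. Poly_Mapping.single v (Poly_Mapping.lookup q v))"
      by (rule arg_cong2[where f = "(*)"]; rule poly_mapping_expansion)
    then show ?thesis by (simp only: sum_distrib_left sum_distrib_right)
  qed
  then have "free_hom h (p * q) = (\<Sum>v\<in>Poly_Mapping.keys q. \<Sum>u\<in>Poly_Mapping.keys p.
       (scal (Poly_Mapping.lookup p u) * eval_word h u) * (scal (Poly_Mapping.lookup q v) * eval_word h v))"
    by (simp add: free_hom_sum mult_single free_hom_single split)
  also have "\<dots> = free_hom h p * free_hom h q"
    by (simp add: free_hom_def sum_distrib_left sum_distrib_right)
  finally show ?thesis .
qed

lemma free_hom_scal [simp]: "free_hom h (scal c) = scal c"
  unfolding scal_def free_hom_single by simp

lemma free_hom_one [simp]: "free_hom h 1 = 1"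
  using free_hom_scal[of h 1] by simp

lemma free_hom_gen [simp]: "free_hom h (gen g) = h g"
  by (simp add: gen_def free_hom_single)

lemma free_hom_power: "free_hom h (p ^ n) = free_hom h p ^ n"
  by (induction n) (simp_all add: free_hom_mult)

lemma free_hom_prod_list: "free_hom h (prod_list xs) = prod_list (map (free_hom h) xs)"
  by (induction xs) (simp_all add: free_hom_mult)

lemmas free_hom_simps = free_hom_add free_hom_diff free_hom_mult free_hom_power free_hom_prod_list

lemma free_hom_free_hom: "free_hom g (free_hom h p) = free_hom (\<lambda>x. free_hom g (h x)) p"
proof -
  have "free_hom g (eval_word h w) = eval_word (\<lambda>x. free_hom g (h x)) w" for w
    by (simp add: free_hom_prod_list comp_def)
  then show ?thesis
    unfolding free_hom_def[of h p] free_hom_def[of "\<lambda>x. free_hom g (h x)" p]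
    by (simp only: free_hom_sum free_hom_mult free_hom_scal)
qed

lemma free_hom_gen_id: "free_hom gen p = p"
  unfolding free_hom_def
  by (simp only: single_eq_scal_mult_word[symmetric] poly_mapping_expansion[symmetric])

lemma free_hom_cong:
  assumes "\<And>w g. w \<in> Poly_Mapping.keys p \<Longrightarrow> g \<in> set (letters w) \<Longrightarrow> h g = h' g"
  shows "free_hom h p = free_hom h' p"
  unfolding free_hom_def
proof (rule sum.cong[OF refl])
  fix w assume "w \<in> Poly_Mapping.keys p"
  then have "map h (letters w) = map h' (letters w)" using assms by (intro map_cong) auto
  then show "scal (Poly_Mapping.lookup p w) * eval_word h w = scal (Poly_Mapping.lookup p w) * eval_word h' w"
    by (simp del: map_eq_conv)
qed

abbreviation fcarrier :: "'g set \<Rightarrow> ('g,'k::field) fa set" where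
  "fcarrier G \<equiv> carrier (FreeAlg G)"

lemma fcarrier_iff: "p \<in> fcarrier G \<longleftrightarrow> (\<forall>w\<in>Poly_Mapping.keys p. set (letters w) \<subseteq> G)"
  by (simp add: FreeAlg_def)

lemma FreeAlg_simps [simp]:
  "mult (FreeAlg G) = (*)" "add (FreeAlg G) = (+)" "one (FreeAlg G) = 1" "zero (FreeAlg G) = 0"
  by (simp_all add: FreeAlg_def)

lemma fcarrier_add [intro]: "p \<in> fcarrier G \<Longrightarrow> q \<in> fcarrier G \<Longrightarrow> p + q \<in> fcarrier G"
  using keys_add[of p q] unfolding fcarrier_iff by blast

lemma fcarrier_uminus [intro]: "p \<in> fcarrier G \<Longrightarrow> - p \<in> fcarrier G"
  unfolding fcarrier_iff by simp

lemma fcarrier_diff [intro]: "p \<in> fcarrier G \<Longrightarrow> q \<in> fcarrier G \<Longrightarrow> p - q \<in> fcarrier G"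
  using keys_diff[of p q] unfolding fcarrier_iff by blast

lemma fcarrier_zero [intro, simp]: "0 \<in> fcarrier G"
  unfolding fcarrier_iff by simp

lemma fcarrier_scal [intro, simp]: "scal c \<in> fcarrier G"
  unfolding fcarrier_iff scal_def by (simp add: Wd_Nil)

lemma fcarrier_one [intro, simp]: "1 \<in> fcarrier G"
  using fcarrier_scal[of 1] by simp

lemma fcarrier_gen_iff [simp]: "gen g \<in> fcarrier G \<longleftrightarrow> g \<in> G"
  unfolding fcarrier_iff gen_def by simp

lemma fcarrier_gen [intro]: "g \<in> G \<Longrightarrow> gen g \<in> fcarrier G"
  by simp

lemma fcarrier_mult [intro]: "p \<in> fcarrier G \<Longrightarrow> q \<in> fcarrier G \<Longrightarrow> p * q \<in> fcarrier G"
  using keys_mult[of p q] unfolding fcarrier_iff by fastforce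

lemma fcarrier_power [intro]: "p \<in> fcarrier G \<Longrightarrow> p ^ n \<in> fcarrier G"
  by (induction n) auto

lemma fcarrier_prod_list [intro]: "(\<And>x. x \<in> set xs \<Longrightarrow> x \<in> fcarrier G) \<Longrightarrow> prod_list xs \<in> fcarrier G"
  by (induction xs) auto

lemma fcarrier_sum [intro]: "(\<And>x. x \<in> A \<Longrightarrow> f x \<in> fcarrier G) \<Longrightarrow> sum f A \<in> fcarrier G"
  by (induction A rule: infinite_finite_induct) auto

lemma fcarrier_free_hom [intro]:
  assumes "\<And>g. g \<in> G \<Longrightarrow> h g \<in> fcarrier H" "p \<in> fcarrier G"
  shows "free_hom h p \<in> fcarrier H"
  unfolding free_hom_def
proof (intro fcarrier_sum fcarrier_mult[OF fcarrier_scal] fcarrier_prod_list)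
  fix w x assume "w \<in> Poly_Mapping.keys p" and "x \<in> set (map h (letters w))"
  then show "x \<in> fcarrier H" using assms fcarrier_iff by fastforce
qed

lemma fcarrier_induct [consumes 1, case_names scal gen add mult]:
  fixes p :: "('g,'k::field) fa"
  assumes p: "p \<in> fcarrier G"
    and P_scal: "\<And>c. P (scal c)" and P_gen: "\<And>g. g \<in> G \<Longrightarrow> P (gen g)"
    and P_add: "\<And>x y. x \<in> fcarrier G \<Longrightarrow> y \<in> fcarrier G \<Longrightarrow> P x \<Longrightarrow> P y \<Longrightarrow> P (x + y)"
    and P_mult: "\<And>x y. x \<in> fcarrier G \<Longrightarrow> y \<in> fcarrier G \<Longrightarrow> P x \<Longrightarrow> P y \<Longrightarrow> P (x * y)"
  shows "P p"
proof -
  have word: "P (prod_list (map gen xs)) \<and> (prod_list (map gen xs) :: ('g,'k) fa) \<in> fcarrier G"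
    if "set xs \<subseteq> G" for xs
    using that
  proof (induction xs)
    case Nil
    then show ?case using P_scal[of 1] by simp
  next
    case (Cons x xs)
    then have x: "x \<in> G" and "P (prod_list (map gen xs))"
      and "(prod_list (map gen xs) :: ('g,'k) fa) \<in> fcarrier G"
      by auto
    then show ?case using P_mult[OF fcarrier_gen[OF x] _ P_gen[OF x]] by (simp add: fcarrier_mult)
  qed
  have "S \<subseteq> Poly_Mapping.keys p \<Longrightarrow>
     P (\<Sum>w\<in>S. Poly_Mapping.single w (Poly_Mapping.lookup p w)) \<and>
     (\<Sum>w\<in>S. Poly_Mapping.single w (Poly_Mapping.lookup p w) :: ('g,'k) fa) \<in> fcarrier G" for S
  proof (induction S rule: infinite_finite_induct)
    case (infinite A)
    then show ?case using finite_subset[OF _ finite_keys] by blast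
  next
    case empty
    then show ?case using P_scal[of 0] by simp
  next
    case (insert w F)
    have wG: "set (letters w) \<subseteq> G" using insert.prems p fcarrier_iff by blast
    have s: "Poly_Mapping.single w (Poly_Mapping.lookup p w) = scal (Poly_Mapping.lookup p w) * prod_list (map gen (letters w))"
      by (rule single_eq_scal_mult_word)
    have "P (Poly_Mapping.single w (Poly_Mapping.lookup p w))"
      and "Poly_Mapping.single w (Poly_Mapping.lookup p w) \<in> fcarrier G"
      unfolding s using word[OF wG] P_scal P_mult by blast+
    then show ?case using insert P_add by auto
  qed
  from this[OF order_refl] show ?thesis using poly_mapping_expansion[of p] by simp
qed

lemma FreeAlg_ring: "ring (FreeAlg G)"
proof (rule ringI)
  show "abelian_group (FreeAlg G)"
    by (rule abelian_groupI) (auto simp: add.commute add.assoc intro!: bexI[of _ "- _"])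
  show "monoid (FreeAlg G)"
    by (rule monoidI) (auto simp: mult.assoc)
qed (auto simp: distrib_left distrib_right)

lemma FreeAlg_a_inv: "x \<in> fcarrier G \<Longrightarrow> a_inv (FreeAlg G) x = - x"
proof -
  interpret ring "FreeAlg G" by (rule FreeAlg_ring)
  show "x \<in> fcarrier G \<Longrightarrow> a_inv (FreeAlg G) x = - x" by (rule minus_equality) auto
qed

lemma FreeAlg_a_minus: "x \<in> fcarrier G \<Longrightarrow> y \<in> fcarrier G \<Longrightarrow> a_minus (FreeAlg G) x y = x - y"
  by (simp add: a_minus_def FreeAlg_a_inv)


section \<open>Presented algebras\<close>

(* The ideal generated by Rs in the whole monoid algebra, free of carrier side conditions;
   genideal_eq_rel_ideal shows that on the carrier it is the ideal of the presentation. *)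

inductive_set rel_ideal :: "('g,'k::field) fa set \<Rightarrow> ('g,'k) fa set" for Rs where
  generator: "r \<in> Rs \<Longrightarrow> r \<in> rel_ideal Rs"
| zero [simp, intro]: "0 \<in> rel_ideal Rs"
| add: "x \<in> rel_ideal Rs \<Longrightarrow> y \<in> rel_ideal Rs \<Longrightarrow> x + y \<in> rel_ideal Rs"
| mult: "x \<in> rel_ideal Rs \<Longrightarrow> a * x * b \<in> rel_ideal Rs"

lemma rel_ideal_mult_left: "x \<in> rel_ideal Rs \<Longrightarrow> a * x \<in> rel_ideal Rs"
  using rel_ideal.mult[of x Rs a 1] by simp

lemma rel_ideal_mult_right: "x \<in> rel_ideal Rs \<Longrightarrow> x * b \<in> rel_ideal Rs"
  using rel_ideal.mult[of x Rs 1 b] by simp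

lemma rel_ideal_uminus: "x \<in> rel_ideal Rs \<Longrightarrow> - x \<in> rel_ideal Rs"
  using rel_ideal_mult_left[of x Rs "-1"] by simp

lemma rel_ideal_free_hom:
  assumes "\<And>r. r \<in> R1 \<Longrightarrow> free_hom h r \<in> rel_ideal R2" "x \<in> rel_ideal R1"
  shows "free_hom h x \<in> rel_ideal R2"
  using assms(2)
  by induction (auto simp: assms(1) free_hom_add free_hom_mult intro: rel_ideal.add rel_ideal.mult)

lemma genideal_eq_rel_ideal:
  fixes Rs :: "('g,'k::field) fa set"
  assumes Rs: "Rs \<subseteq> fcarrier G" and p: "p \<in> fcarrier G"
  shows "p \<in> genideal (FreeAlg G) Rs \<longleftrightarrow> p \<in> rel_ideal Rs"
proof -
  interpret R: ring "FreeAlg G" by (rule FreeAlg_ring)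
  let ?I = "genideal (FreeAlg G) Rs"
  have I: "ideal ?I (FreeAlg G)" by (rule R.genideal_ideal[OF Rs])
  interpret I: ideal ?I "FreeAlg G" by (rule I)
  define \<pi> :: "('g,'k) fa \<Rightarrow> ('g,'k) fa" where "\<pi> = free_hom (\<lambda>g. if g \<in> G then gen g else 0)"
  have \<pi>_carrier: "\<pi> x \<in> fcarrier G" for x
    unfolding \<pi>_def free_hom_def by (intro fcarrier_sum fcarrier_mult fcarrier_prod_list) auto
  have \<pi>_id: "\<pi> x = x" if "x \<in> fcarrier G" for x
    using that unfolding \<pi>_def
    by (subst free_hom_cong[where h' = gen]) (auto simp: fcarrier_iff free_hom_gen_id)
  have "\<pi> x \<in> ?I" if "x \<in> rel_ideal Rs" for x
    using that
  proof induction
    case (generator r)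
    then show ?case using Rs R.genideal_self[OF Rs] \<pi>_id by auto
  next
    case (mult x a b)
    then show ?case using I.I_l_closed I.I_r_closed \<pi>_carrier by (simp add: \<pi>_def free_hom_mult)
  qed (use additive_subgroup.zero_closed[OF ideal.axioms(1)[OF I]]
          additive_subgroup.a_closed[OF ideal.axioms(1)[OF I]] in \<open>simp_all add: \<pi>_def free_hom_add\<close>)
  moreover have "?I \<subseteq> rel_ideal Rs"
  proof -
    have "ideal (rel_ideal Rs \<inter> fcarrier G) (FreeAlg G)"
    proof (rule idealI[OF FreeAlg_ring])
      show "subgroup (rel_ideal Rs \<inter> fcarrier G) (add_monoid (FreeAlg G))"
        by (rule R.add.subgroupI) (auto simp: FreeAlg_a_inv intro: rel_ideal_uminus rel_ideal.add)
    qed (auto intro: rel_ideal_mult_left rel_ideal_mult_right)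
    then have "?I \<subseteq> rel_ideal Rs \<inter> fcarrier G"
      by (rule R.genideal_minimal) (use Rs rel_ideal.generator in auto)
    then show ?thesis by blast
  qed
  ultimately show ?thesis using \<pi>_id[OF p] by (metis subsetD)
qed

definition rel_cong :: "('g,'k::field) fa set \<Rightarrow> ('g,'k) fa \<Rightarrow> ('g,'k) fa \<Rightarrow> bool" where
  "rel_cong Rs x y \<longleftrightarrow> x - y \<in> rel_ideal Rs"

lemma rel_cong_refl [simp, intro]: "rel_cong Rs x x"
  by (simp add: rel_cong_def)

lemma rel_cong_sym: "rel_cong Rs x y \<Longrightarrow> rel_cong Rs y x"
  unfolding rel_cong_def using rel_ideal_uminus[of "x - y" Rs] by simp

lemma rel_cong_trans [trans]: "rel_cong Rs x y \<Longrightarrow> rel_cong Rs y z \<Longrightarrow> rel_cong Rs x z"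
  unfolding rel_cong_def using rel_ideal.add[of "x - y" Rs "y - z"] by simp

lemma rel_cong_add: "rel_cong Rs x x' \<Longrightarrow> rel_cong Rs y y' \<Longrightarrow> rel_cong Rs (x + y) (x' + y')"
  unfolding rel_cong_def by (drule (1) rel_ideal.add) (simp add: algebra_simps)

lemma rel_cong_uminus: "rel_cong Rs x y \<Longrightarrow> rel_cong Rs (- x) (- y)"
  unfolding rel_cong_def using rel_ideal_uminus[of "x - y" Rs] by (simp add: algebra_simps)

lemma rel_cong_diff: "rel_cong Rs x x' \<Longrightarrow> rel_cong Rs y y' \<Longrightarrow> rel_cong Rs (x - y) (x' - y')"
  using rel_cong_add[OF _ rel_cong_uminus, of Rs x x' y y'] by simp

lemma rel_cong_mult: "rel_cong Rs x x' \<Longrightarrow> rel_cong Rs y y' \<Longrightarrow> rel_cong Rs (x * y) (x' * y')"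
proof -
  assume "rel_cong Rs x x'" "rel_cong Rs y y'"
  then have "(x - x') * y + x' * (y - y') \<in> rel_ideal Rs"
    unfolding rel_cong_def by (intro rel_ideal.add rel_ideal_mult_left rel_ideal_mult_right)
  then show ?thesis unfolding rel_cong_def by (simp add: algebra_simps)
qed

lemma rel_cong_mult_left: "rel_cong Rs y y' \<Longrightarrow> rel_cong Rs (a * y) (a * y')"
  by (rule rel_cong_mult[OF rel_cong_refl])

lemma rel_cong_mult_right: "rel_cong Rs x x' \<Longrightarrow> rel_cong Rs (x * b) (x' * b)"
  by (rule rel_cong_mult[OF _ rel_cong_refl])

lemma rel_cong_prod_list:
  "(\<And>i. i \<in> set xs \<Longrightarrow> rel_cong Rs (f i) (g i)) \<Longrightarrow>
   rel_cong Rs (prod_list (map f xs)) (prod_list (map g xs))"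
  by (induction xs) (simp_all add: rel_cong_mult)

lemma rel_cong_zero_if_neg:
  assumes "(2::'k::field) \<noteq> 0" "rel_cong Rs (x :: ('g,'k) fa) (- x)"
  shows "rel_cong Rs x 0"
proof -
  have "scal (inverse 2) * (x - - x) \<in> rel_ideal Rs"
    using assms(2) unfolding rel_cong_def by (rule rel_ideal_mult_left)
  moreover have "scal (inverse (2::'k)) * (x - - x) = x"
  proof -
    have two: "scal (2::'k) = 1 + 1" using scal_add[of "1::'k" 1] by (simp add: one_add_one)
    have "x - - x = (1 + 1) * x" by (simp only: diff_minus_eq_add distrib_right mult_1_left)
    also have "\<dots> = scal 2 * x" by (simp only: two)
    finally have "scal (inverse (2::'k)) * (x - - x) = scal (inverse 2 * 2) * x"
      by (simp only: scal_mult mult.assoc)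
    then show ?thesis using assms(1) by simp
  qed
  ultimately show ?thesis by (simp add: rel_cong_def)
qed

lemma Presented_ideal: "Rs \<subseteq> fcarrier G \<Longrightarrow> ideal (genideal (FreeAlg G) Rs) (FreeAlg G)"
  by (rule ring.genideal_ideal[OF FreeAlg_ring])

lemma cls_ring_hom: "Rs \<subseteq> fcarrier G \<Longrightarrow> cls G Rs \<in> ring_hom (FreeAlg G) (Presented G Rs)"
  unfolding Presented_def cls_def[abs_def] by (rule ideal.rcos_ring_hom[OF Presented_ideal])

lemma carrier_Presented: "carrier (Presented G Rs) = cls G Rs ` fcarrier G"
  unfolding Presented_def FactRing_def cls_def A_RCOSETS_def' by auto

lemma cls_mult:
  assumes "Rs \<subseteq> fcarrier G" "p \<in> fcarrier G" "p' \<in> fcarrier G"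
  shows "cls G Rs p \<otimes>\<^bsub>Presented G Rs\<^esub> cls G Rs p' = cls G Rs (p * p')"
  using ring_hom_mult[OF cls_ring_hom[OF assms(1)] assms(2,3)] by simp

lemma cls_add:
  assumes "Rs \<subseteq> fcarrier G" "p \<in> fcarrier G" "p' \<in> fcarrier G"
  shows "cls G Rs p \<oplus>\<^bsub>Presented G Rs\<^esub> cls G Rs p' = cls G Rs (p + p')"
  using ring_hom_add[OF cls_ring_hom[OF assms(1)] assms(2,3)] by simp

lemma cls_eq_iff:
  assumes Rs: "Rs \<subseteq> fcarrier G" and p: "p \<in> fcarrier G" and p': "p' \<in> fcarrier G"
  shows "cls G Rs p = cls G Rs p' \<longleftrightarrow> rel_cong Rs p p'"
proof -
  interpret I: ideal "genideal (FreeAlg G) Rs" "FreeAlg G" by (rule Presented_ideal[OF Rs])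
  have "cls G Rs p = cls G Rs p' \<longleftrightarrow> p \<in> cls G Rs p'"
    unfolding cls_def using I.a_repr_independenceD[of p p'] I.a_repr_independence'[of p p'] p p'
    by auto
  also have "\<dots> \<longleftrightarrow> p - p' \<in> genideal (FreeAlg G) Rs"
    unfolding cls_def using I.a_rcos_module_minus[OF FreeAlg_ring p' p] p p'
    by (simp add: FreeAlg_a_minus)
  also have "\<dots> \<longleftrightarrow> rel_cong Rs p p'"
    unfolding rel_cong_def by (rule genideal_eq_rel_ideal[OF Rs]) (use p p' in auto)
  finally show ?thesis .
qed

definition induced_map :: "'g set \<Rightarrow> ('g,'k::field) fa set \<Rightarrow> 'h set \<Rightarrow> ('h,'k) fa set \<Rightarrow>
    ('g \<Rightarrow> ('h,'k) fa) \<Rightarrow> ('g,'k) fa set \<Rightarrow> ('h,'k) fa set" where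
  "induced_map G1 R1 G2 R2 h X = cls G2 R2 (free_hom h (SOME p. p \<in> fcarrier G1 \<and> X = cls G1 R1 p))"

locale presentation_hom =
  fixes G1 :: "'g set" and R1 :: "('g,'k::field) fa set" and G2 :: "'h set" and R2 :: "('h,'k) fa set"
    and h :: "'g \<Rightarrow> ('h,'k) fa"
  assumes R1_carrier: "R1 \<subseteq> fcarrier G1" and R2_carrier: "R2 \<subseteq> fcarrier G2"
    and h_carrier: "\<And>g. g \<in> G1 \<Longrightarrow> h g \<in> fcarrier G2"
    and h_rels: "\<And>r. r \<in> R1 \<Longrightarrow> free_hom h r \<in> rel_ideal R2"
begin

lemma free_hom_carrier: "p \<in> fcarrier G1 \<Longrightarrow> free_hom h p \<in> fcarrier G2"
  by (rule fcarrier_free_hom[OF h_carrier])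

lemma induced_map_cls:
  assumes p: "p \<in> fcarrier G1"
  shows "induced_map G1 R1 G2 R2 h (cls G1 R1 p) = cls G2 R2 (free_hom h p)"
proof -
  define p' where "p' = (SOME p'. p' \<in> fcarrier G1 \<and> cls G1 R1 p = cls G1 R1 p')"
  have "p' \<in> fcarrier G1 \<and> cls G1 R1 p = cls G1 R1 p'"
    unfolding p'_def by (rule someI[of _ p]) (use p in auto)
  then have p': "p' \<in> fcarrier G1" and "rel_cong R1 p' p"
    using cls_eq_iff[OF R1_carrier _ p] by auto
  then have "rel_cong R2 (free_hom h p') (free_hom h p)"
    unfolding rel_cong_def using rel_ideal_free_hom[OF h_rels] by (simp add: free_hom_diff[symmetric])
  then show ?thesis
    unfolding induced_map_def p'_def[symmetric]
    using cls_eq_iff[OF R2_carrier free_hom_carrier[OF p'] free_hom_carrier[OF p]] by simp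
qed

lemma induced_map_ring_hom: "induced_map G1 R1 G2 R2 h \<in> ring_hom (Presented G1 R1) (Presented G2 R2)"
proof (rule ring_hom_memI)
  fix X Y assume "X \<in> carrier (Presented G1 R1)" "Y \<in> carrier (Presented G1 R1)"
  then obtain p p' where p: "p \<in> fcarrier G1" "X = cls G1 R1 p" and p': "p' \<in> fcarrier G1" "Y = cls G1 R1 p'"
    by (auto simp: carrier_Presented)
  show "induced_map G1 R1 G2 R2 h X \<in> carrier (Presented G2 R2)"
    using p free_hom_carrier by (auto simp: carrier_Presented induced_map_cls)
  show "induced_map G1 R1 G2 R2 h (X \<otimes>\<^bsub>Presented G1 R1\<^esub> Y) =
        induced_map G1 R1 G2 R2 h X \<otimes>\<^bsub>Presented G2 R2\<^esub> induced_map G1 R1 G2 R2 h Y"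
    using p p' by (simp add: cls_mult[OF R1_carrier] cls_mult[OF R2_carrier] induced_map_cls
        free_hom_carrier free_hom_mult fcarrier_mult)
  show "induced_map G1 R1 G2 R2 h (X \<oplus>\<^bsub>Presented G1 R1\<^esub> Y) =
        induced_map G1 R1 G2 R2 h X \<oplus>\<^bsub>Presented G2 R2\<^esub> induced_map G1 R1 G2 R2 h Y"
    using p p' by (simp add: cls_add[OF R1_carrier] cls_add[OF R2_carrier] induced_map_cls
        free_hom_carrier free_hom_add fcarrier_add)
next
  show "induced_map G1 R1 G2 R2 h \<one>\<^bsub>Presented G1 R1\<^esub> = \<one>\<^bsub>Presented G2 R2\<^esub>"
    using induced_map_cls[OF fcarrier_one]
    by (simp add: ring_hom_one[OF cls_ring_hom[OF R1_carrier], symmetric]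
        ring_hom_one[OF cls_ring_hom[OF R2_carrier], symmetric])
qed

end

lemma free_hom_free_hom_rel_cong:
  assumes "\<And>g. g \<in> G \<Longrightarrow> rel_cong Rs (free_hom h' (h g)) (gen g)" and "p \<in> fcarrier G"
  shows "rel_cong Rs (free_hom h' (free_hom h p)) p"
  using assms(2)
  by (induction rule: fcarrier_induct) (auto simp: assms(1) free_hom_add free_hom_mult intro: rel_cong_add rel_cong_mult)

lemma induced_map_inverse:
  assumes h: "presentation_hom G1 R1 G2 R2 h" and h': "presentation_hom G2 R2 G1 R1 h'"
    and inv: "\<And>g. g \<in> G1 \<Longrightarrow> rel_cong R1 (free_hom h' (h g)) (gen g)"
    and x: "x \<in> carrier (Presented G1 R1)"
  shows "induced_map G2 R2 G1 R1 h' (induced_map G1 R1 G2 R2 h x) = x"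
proof -
  interpret h: presentation_hom G1 R1 G2 R2 h by (rule h)
  interpret h': presentation_hom G2 R2 G1 R1 h' by (rule h')
  obtain p where p: "p \<in> fcarrier G1" "x = cls G1 R1 p"
    using x by (auto simp: carrier_Presented)
  have "cls G1 R1 (free_hom h' (free_hom h p)) = cls G1 R1 p"
    using cls_eq_iff[OF h.R1_carrier h'.free_hom_carrier[OF h.free_hom_carrier[OF p(1)]] p(1)]
      free_hom_free_hom_rel_cong[OF inv p(1)] by simp
  then show ?thesis
    using p h.induced_map_cls h'.induced_map_cls[OF h.free_hom_carrier[OF p(1)]] by simp
qed

lemma induced_map_ring_iso:
  assumes h: "presentation_hom G1 R1 G2 R2 h" and h': "presentation_hom G2 R2 G1 R1 h'"
    and inv: "\<And>g. g \<in> G1 \<Longrightarrow> rel_cong R1 (free_hom h' (h g)) (gen g)"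
    and inv': "\<And>g. g \<in> G2 \<Longrightarrow> rel_cong R2 (free_hom h (h' g)) (gen g)"
  shows "induced_map G1 R1 G2 R2 h \<in> ring_iso (Presented G1 R1) (Presented G2 R2)"
proof -
  note hom = presentation_hom.induced_map_ring_hom[OF h]
  note hom' = presentation_hom.induced_map_ring_hom[OF h']
  have "bij_betw (induced_map G1 R1 G2 R2 h) (carrier (Presented G1 R1)) (carrier (Presented G2 R2))"
    by (rule bij_betw_byWitness[where f' = "induced_map G2 R2 G1 R1 h'"])
       (use induced_map_inverse[OF h h' inv] induced_map_inverse[OF h' h inv']
          ring_hom_closed[OF hom] ring_hom_closed[OF hom'] in auto)
  then show ?thesis using hom by (simp add: ring_iso_def)
qed


section \<open>Commutation modulo relations\<close>

definition commute_mod :: "('g,'k::field) fa set \<Rightarrow> ('g,'k) fa \<Rightarrow> ('g,'k) fa \<Rightarrow> bool" where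
  "commute_mod Rs x y \<longleftrightarrow> rel_cong Rs (x * y) (y * x)"

definition anticommute_mod :: "('g,'k::field) fa set \<Rightarrow> ('g,'k) fa \<Rightarrow> ('g,'k) fa \<Rightarrow> bool" where
  "anticommute_mod Rs x y \<longleftrightarrow> rel_cong Rs (x * y) (- (y * x))"

definition qcommute_mod :: "('g,'k::field) fa set \<Rightarrow> 'k \<Rightarrow> ('g,'k) fa \<Rightarrow> ('g,'k) fa \<Rightarrow> bool" where
  "qcommute_mod Rs \<alpha> x y \<longleftrightarrow> rel_cong Rs (x * y) (scal \<alpha> * y * x)"

lemma commute_mod_sym: "commute_mod Rs x y \<Longrightarrow> commute_mod Rs y x"
  by (simp add: commute_mod_def rel_cong_sym)

lemma anticommute_mod_sym: "anticommute_mod Rs x y \<Longrightarrow> anticommute_mod Rs y x"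
  unfolding anticommute_mod_def using rel_cong_uminus[of Rs "x * y" "- (y * x)"] by (simp add: rel_cong_sym)

lemma commute_mod_refl [simp]: "commute_mod Rs x x"
  by (simp add: commute_mod_def)

lemma commute_mod_one [simp]: "commute_mod Rs x 1"
  by (simp add: commute_mod_def)

lemma commute_mod_scal [simp]: "commute_mod Rs x (scal c)"
  by (simp add: commute_mod_def scal_commute)

lemma qcommute_mod_one: "qcommute_mod Rs 1 x y \<longleftrightarrow> commute_mod Rs x y"
  by (simp add: qcommute_mod_def commute_mod_def)

lemma commute_mod_mult:
  assumes "commute_mod Rs x y" "commute_mod Rs x z"
  shows "commute_mod Rs x (y * z)"
proof -
  have "rel_cong Rs (x * (y * z)) ((y * x) * z)"
    using rel_cong_mult_right[OF assms(1)[unfolded commute_mod_def]] by (simp add: mult.assoc)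
  also have "rel_cong Rs \<dots> (y * (z * x))"
    using rel_cong_mult_left[OF assms(2)[unfolded commute_mod_def]] by (simp add: mult.assoc)
  finally show ?thesis by (simp add: commute_mod_def mult.assoc)
qed

lemma anticommute_anticommute_mod_mult:
  assumes "anticommute_mod Rs x y" "anticommute_mod Rs x z"
  shows "commute_mod Rs x (y * z)"
proof -
  have "rel_cong Rs (x * (y * z)) (- (y * x) * z)"
    using rel_cong_mult_right[OF assms(1)[unfolded anticommute_mod_def]] by (simp add: mult.assoc)
  also have "rel_cong Rs \<dots> (y * (z * x))"
    using rel_cong_uminus[OF rel_cong_mult_left[OF assms(2)[unfolded anticommute_mod_def]]]
    by (simp add: mult.assoc)
  finally show ?thesis by (simp add: commute_mod_def mult.assoc)
qed

lemma anticommute_commute_mod_mult: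
  assumes "anticommute_mod Rs x y" "commute_mod Rs x z"
  shows "anticommute_mod Rs x (y * z)"
proof -
  have "rel_cong Rs (x * (y * z)) (- (y * x) * z)"
    using rel_cong_mult_right[OF assms(1)[unfolded anticommute_mod_def]] by (simp add: mult.assoc)
  also have "rel_cong Rs \<dots> (- (y * (z * x)))"
    using rel_cong_uminus[OF rel_cong_mult_left[OF assms(2)[unfolded commute_mod_def]]]
    by (simp add: mult.assoc)
  finally show ?thesis by (simp add: anticommute_mod_def mult.assoc)
qed

lemma commute_anticommute_mod_mult:
  assumes "commute_mod Rs x y" "anticommute_mod Rs x z"
  shows "anticommute_mod Rs x (y * z)"
proof -
  have "rel_cong Rs (x * (y * z)) ((y * x) * z)"
    using rel_cong_mult_right[OF assms(1)[unfolded commute_mod_def]] by (simp add: mult.assoc)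
  also have "rel_cong Rs \<dots> (- (y * (z * x)))"
    using rel_cong_mult_left[OF assms(2)[unfolded anticommute_mod_def]] by (simp add: mult.assoc)
  finally show ?thesis by (simp add: anticommute_mod_def mult.assoc)
qed

lemma commute_mod_add: "commute_mod Rs x y \<Longrightarrow> commute_mod Rs x z \<Longrightarrow> commute_mod Rs x (y + z)"
  unfolding commute_mod_def by (drule (1) rel_cong_add) (simp add: algebra_simps)

lemma commute_mod_diff: "commute_mod Rs x y \<Longrightarrow> commute_mod Rs x z \<Longrightarrow> commute_mod Rs x (y - z)"
  unfolding commute_mod_def by (drule (1) rel_cong_diff) (simp add: algebra_simps)

lemma commute_mod_prod_list:
  "(\<And>i. i \<in> set xs \<Longrightarrow> commute_mod Rs x (f i)) \<Longrightarrow> commute_mod Rs x (prod_list (map f xs))"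
  by (induction xs) (simp_all add: commute_mod_mult)

lemma qcommute_mod_mult:
  assumes "qcommute_mod Rs \<alpha> x y" "qcommute_mod Rs \<beta> x z"
  shows "qcommute_mod Rs (\<alpha> * \<beta>) x (y * z)"
proof -
  have "rel_cong Rs (x * (y * z)) (scal \<alpha> * y * x * z)"
    using rel_cong_mult_right[OF assms(1)[unfolded qcommute_mod_def]] by (simp add: mult.assoc)
  also have "rel_cong Rs \<dots> (scal \<alpha> * y * (scal \<beta> * z * x))"
    using rel_cong_mult_left[OF assms(2)[unfolded qcommute_mod_def], of "scal \<alpha> * y"]
    by (simp add: mult.assoc)
  also have "scal \<alpha> * y * (scal \<beta> * z * x) = scal (\<alpha> * \<beta>) * (y * z) * x"
    using mult_scal_left_commute[of y \<beta> "z * x"] by (simp add: mult.assoc scal_mult)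
  finally show ?thesis by (simp add: qcommute_mod_def mult.assoc)
qed

lemma qcommute_mod_diff:
  "qcommute_mod Rs \<alpha> x y \<Longrightarrow> qcommute_mod Rs \<alpha> x z \<Longrightarrow> qcommute_mod Rs \<alpha> x (y - z)"
  unfolding qcommute_mod_def by (drule (1) rel_cong_diff) (simp add: algebra_simps)

lemma qcommute_mod_inverse:
  assumes xy: "qcommute_mod Rs \<alpha> x y" and "\<alpha> \<noteq> 0"
    and inv: "rel_cong Rs (x * x') 1" and inv': "rel_cong Rs (x' * x) 1"
  shows "qcommute_mod Rs (inverse \<alpha>) x' y"
proof -
  have yx: "rel_cong Rs (y * x) (scal (inverse \<alpha>) * (x * y))"
  proof -
    have "rel_cong Rs (scal (inverse \<alpha>) * (x * y)) (scal (inverse \<alpha>) * (scal \<alpha> * y * x))"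
      using rel_cong_mult_left[OF xy[unfolded qcommute_mod_def]] by blast
    also have "scal (inverse \<alpha>) * (scal \<alpha> * y * x) = y * x"
      using \<open>\<alpha> \<noteq> 0\<close> by (simp add: mult.assoc[symmetric] scal_mult[symmetric])
    finally show ?thesis by (rule rel_cong_sym)
  qed
  have "rel_cong Rs (x' * y) (x' * (y * x) * x')"
    using rel_cong_mult_left[OF rel_cong_sym[OF inv], of "x' * y"] by (simp add: mult.assoc)
  also have "rel_cong Rs \<dots> (x' * (scal (inverse \<alpha>) * (x * y)) * x')"
    by (intro rel_cong_mult_right rel_cong_mult_left yx)
  also have "x' * (scal (inverse \<alpha>) * (x * y)) * x' = scal (inverse \<alpha>) * ((x' * x) * y * x')"
    by (simp add: mult_scal_left_commute mult.assoc)
  also have "rel_cong Rs \<dots> (scal (inverse \<alpha>) * (1 * y * x'))"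
    by (intro rel_cong_mult_left rel_cong_mult_right inv')
  finally show ?thesis by (simp add: qcommute_mod_def mult.assoc)
qed

lemma anticommute_mod_transfer:
  "rel_cong Rs (x * y) (x' * y') \<Longrightarrow> rel_cong Rs (y * x) (y' * x') \<Longrightarrow>
   anticommute_mod Rs x' y' \<Longrightarrow> anticommute_mod Rs x y"
  unfolding anticommute_mod_def by (meson rel_cong_sym rel_cong_trans rel_cong_uminus)

lemma twisted_mult:
  assumes "commute_mod Rs X F" "commute_mod Rs Y F" "rel_cong Rs (F * F) 1"
  shows "rel_cong Rs ((F * X) * (F * Y)) (X * Y)"
proof -
  have "(F * X) * (F * Y) = F * (X * F) * Y" by (simp add: mult.assoc)
  also have "rel_cong Rs \<dots> (F * (F * X) * Y)"
    using assms(1) by (intro rel_cong_mult_right rel_cong_mult_left) (simp add: commute_mod_def)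
  also have "F * (F * X) * Y = (F * F) * (X * Y)" by (simp add: mult.assoc)
  also have "rel_cong Rs \<dots> (1 * (X * Y))" by (rule rel_cong_mult_right[OF assms(3)])
  finally show ?thesis by simp
qed

lemma twisted_anticommute_mult:
  assumes "anticommute_mod Rs X F'" "commute_mod Rs F Y" "commute_mod Rs F F'"
  shows "rel_cong Rs ((F * X) * (F' * Y)) (- (F * F' * (X * Y)))"
    and "rel_cong Rs ((F' * Y) * (F * X)) (F * F' * (Y * X))"
proof -
  have "(F * X) * (F' * Y) = F * (X * F') * Y" by (simp add: mult.assoc)
  also have "rel_cong Rs \<dots> (F * (- (F' * X)) * Y)"
    using assms(1) by (intro rel_cong_mult_right rel_cong_mult_left) (simp add: anticommute_mod_def)
  finally show "rel_cong Rs ((F * X) * (F' * Y)) (- (F * F' * (X * Y)))" by (simp add: mult.assoc)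
  have "(F' * Y) * (F * X) = F' * (Y * F) * X" by (simp add: mult.assoc)
  also have "rel_cong Rs \<dots> (F' * (F * Y) * X)"
    using assms(2) by (intro rel_cong_mult_right rel_cong_mult_left) (simp add: commute_mod_def rel_cong_sym)
  also have "F' * (F * Y) * X = (F' * F) * (Y * X)" by (simp add: mult.assoc)
  also have "rel_cong Rs \<dots> ((F * F') * (Y * X))"
    using assms(3) by (intro rel_cong_mult_right) (simp add: commute_mod_def rel_cong_sym)
  finally show "rel_cong Rs ((F' * Y) * (F * X)) (F * F' * (Y * X))" .
qed

lemma twisted_commute:
  assumes "anticommute_mod Rs X F'" "commute_mod Rs F Y" "commute_mod Rs F F'"
    and "anticommute_mod Rs X Y"
  shows "commute_mod Rs (F * X) (F' * Y)"
proof -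
  note twist = twisted_anticommute_mult[OF assms(1-3)]
  have "rel_cong Rs (F * F' * (Y * X)) (- (F * F' * (X * Y)))"
    using rel_cong_mult_left[OF anticommute_mod_sym[OF assms(4), unfolded anticommute_mod_def], of "F * F'"]
    by simp
  then show ?thesis
    unfolding commute_mod_def using twist by (meson rel_cong_sym rel_cong_trans)
qed

lemma twisted_anticommute:
  assumes "anticommute_mod Rs X F'" "commute_mod Rs F Y" "commute_mod Rs F F'"
    and "commute_mod Rs X Y"
  shows "anticommute_mod Rs (F * X) (F' * Y)"
proof -
  note twist = twisted_anticommute_mult[OF assms(1-3)]
  have "rel_cong Rs (F * F' * (X * Y)) (F * F' * (Y * X))"
    using rel_cong_mult_left[OF assms(4)[unfolded commute_mod_def], of "F * F'"] by simp
  then show ?thesis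
    unfolding anticommute_mod_def using twist by (meson rel_cong_sym rel_cong_trans rel_cong_uminus)
qed

lemma involution_mult:
  assumes "commute_mod Rs B A" "rel_cong Rs (A * A) 1" "rel_cong Rs (B * B) 1"
  shows "rel_cong Rs ((A * B) * (A * B)) 1"
proof -
  have "(A * B) * (A * B) = A * (B * A) * B" by (simp add: mult.assoc)
  also have "rel_cong Rs \<dots> (A * (A * B) * B)"
    using assms(1) by (intro rel_cong_mult_right rel_cong_mult_left) (simp add: commute_mod_def)
  also have "A * (A * B) * B = (A * A) * (B * B)" by (simp add: mult.assoc)
  also have "rel_cong Rs \<dots> (1 * 1)" by (rule rel_cong_mult[OF assms(2,3)])
  finally show ?thesis by simp
qed


section \<open>The Clifford relations in an arbitrary target\<close>

locale clifford_rels =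
  fixes Rs :: "('h,'k::field) fa set" and e :: "cgen \<Rightarrow> ('h,'k) fa" and q :: 'k and N k :: nat
  assumes om_om_commute: "a \<in> {1..N} \<Longrightarrow> b \<in> {1..N} \<Longrightarrow> commute_mod Rs (e (Om a)) (e (Om b))"
    and om_omi: "a \<in> {1..N} \<Longrightarrow> rel_cong Rs (e (Om a) * e (OmI a)) 1"
    and omi_om: "a \<in> {1..N} \<Longrightarrow> rel_cong Rs (e (OmI a) * e (Om a)) 1"
    and om_psi: "a \<in> {1..N} \<Longrightarrow> b \<in> {1..N} \<Longrightarrow>
      qcommute_mod Rs (if a = b then q else 1) (e (Om a)) (e (Psi b))"
    and om_psis: "a \<in> {1..N} \<Longrightarrow> b \<in> {1..N} \<Longrightarrow>
      qcommute_mod Rs (if a = b then inverse q else 1) (e (Om a)) (e (PsiS b))"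
    and psi_psi: "a \<in> {1..N} \<Longrightarrow> b \<in> {1..N} \<Longrightarrow> anticommute_mod Rs (e (Psi a)) (e (Psi b))"
    and psis_psis: "a \<in> {1..N} \<Longrightarrow> b \<in> {1..N} \<Longrightarrow> anticommute_mod Rs (e (PsiS a)) (e (PsiS b))"
    and psi_psis: "a \<in> {1..N} \<Longrightarrow> b \<in> {1..N} \<Longrightarrow> a \<noteq> b \<Longrightarrow>
      anticommute_mod Rs (e (Psi a)) (e (PsiS b))"
    and psi_psis_omi: "a \<in> {1..N} \<Longrightarrow>
      rel_cong Rs (e (Psi a) * e (PsiS a) + scal (q ^ k) * e (PsiS a) * e (Psi a)) (e (OmI a) ^ k)"
    and psi_psis_om: "a \<in> {1..N} \<Longrightarrow>
      rel_cong Rs (e (Psi a) * e (PsiS a) + scal (inverse q ^ k) * e (PsiS a) * e (Psi a)) (e (Om a) ^ k)"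

lemma Ball_if_empty: "(\<forall>x\<in>(if P then A else {}). Q x) \<longleftrightarrow> (P \<longrightarrow> (\<forall>x\<in>A. Q x))"
  by simp

lemma clifford_rels_iff:
  "clifford_rels Rs e q N k \<longleftrightarrow> (\<forall>r\<in>cl_rels q N k. free_hom e r \<in> rel_ideal Rs)"
proof
  assume "clifford_rels Rs e q N k"
  then interpret clifford_rels Rs e q N k .
  show "\<forall>r\<in>cl_rels q N k. free_hom e r \<in> rel_ideal Rs"
    unfolding cl_rels_def ball_UN ball_Un ball_simps Ball_if_empty free_hom_simps free_hom_gen free_hom_scal
      free_hom_one
    using om_om_commute om_omi omi_om om_psi om_psis psi_psi psis_psis psi_psis psi_psis_omi psi_psis_om
    unfolding commute_mod_def anticommute_mod_def qcommute_mod_def rel_cong_def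
    by (intro ballI conjI impI) (simp_all split del: if_split)
next
  assume "\<forall>r\<in>cl_rels q N k. free_hom e r \<in> rel_ideal Rs"
  then show "clifford_rels Rs e q N k"
    unfolding cl_rels_def
    by unfold_locales (auto simp: commute_mod_def anticommute_mod_def qcommute_mod_def rel_cong_def
        free_hom_simps Ball_if_empty)
qed

lemma clifford_rels_gen: "clifford_rels (cl_rels q N k) gen q N k"
  unfolding clifford_rels_iff by (simp add: free_hom_gen_id rel_ideal.generator)

locale clifford_rep = clifford_rels Rs e q N k
  for Rs :: "('h,'k::field) fa set" and e q N k +
  assumes two_nonzero: "(2::'k) \<noteq> 0" and q_nonzero: "q \<noteq> 0"
begin

abbreviation rel_eq (infix "\<approx>" 50) where "x \<approx> y \<equiv> rel_cong Rs x y"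
abbreviation "psi a \<equiv> e (Psi a)"
abbreviation "psis a \<equiv> e (PsiS a)"
abbreviation "om a \<equiv> e (Om a)"
abbreviation "omi a \<equiv> e (OmI a)"

definition comm :: "nat \<Rightarrow> ('h,'k) fa" where
  "comm a = psi a * psis a - psis a * psi a"

definition fprod :: "nat \<Rightarrow> ('h,'k) fa" where
  "fprod r = prod_list (map comm [1..<r+1])"

lemma free_hom_fr: "free_hom e (fr r) = fprod r"
  unfolding fr_def fprod_def comm_def by (simp add: free_hom_simps comp_def)

lemma fprod_Suc: "fprod (Suc r) = fprod r * comm (Suc r)"
  by (simp add: fprod_def)

lemma psi_square: "a \<in> {1..N} \<Longrightarrow> psi a * psi a \<approx> 0"
  using rel_cong_zero_if_neg[OF two_nonzero] psi_psi[of a a] by (simp add: anticommute_mod_def)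

lemma psis_square: "a \<in> {1..N} \<Longrightarrow> psis a * psis a \<approx> 0"
  using rel_cong_zero_if_neg[OF two_nonzero] psis_psis[of a a] by (simp add: anticommute_mod_def)

lemma omi_psi:
  "a \<in> {1..N} \<Longrightarrow> b \<in> {1..N} \<Longrightarrow>
   qcommute_mod Rs (inverse (if a = b then q else 1)) (omi a) (psi b)"
  by (rule qcommute_mod_inverse[OF om_psi _ om_omi omi_om]) (use q_nonzero in auto)

lemma omi_psis:
  "a \<in> {1..N} \<Longrightarrow> b \<in> {1..N} \<Longrightarrow>
   qcommute_mod Rs (inverse (if a = b then inverse q else 1)) (omi a) (psis b)"
  by (rule qcommute_mod_inverse[OF om_psis _ om_omi omi_om]) (use q_nonzero in auto)

lemma omi_om_commute: "a \<in> {1..N} \<Longrightarrow> b \<in> {1..N} \<Longrightarrow> commute_mod Rs (omi a) (om b)"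
  using qcommute_mod_inverse[of Rs 1 "om a" "om b" "omi a"] om_om_commute om_omi omi_om
  by (simp add: qcommute_mod_one)

lemma omi_omi_commute: "a \<in> {1..N} \<Longrightarrow> b \<in> {1..N} \<Longrightarrow> commute_mod Rs (omi a) (omi b)"
  using qcommute_mod_inverse[of Rs 1 "om a" "omi b" "omi a"] commute_mod_sym[OF omi_om_commute] om_omi omi_om
  by (simp add: qcommute_mod_one)

lemma psi_comm_anticommute:
  assumes a: "a \<in> {1..N}"
  shows "anticommute_mod Rs (psi a) (comm a)"
proof -
  have "psi a * comm a = (psi a * psi a) * psis a - psi a * psis a * psi a"
    by (simp add: comm_def algebra_simps)
  also have "\<dots> \<approx> 0 * psis a - psi a * psis a * psi a"
    by (intro rel_cong_diff rel_cong_mult_right psi_square[OF a] rel_cong_refl)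
  also have "0 * psis a - psi a * psis a * psi a = - (psi a * psis a * psi a - psis a * 0)"
    by simp
  also have "\<dots> \<approx> - (psi a * psis a * psi a - psis a * (psi a * psi a))"
    by (intro rel_cong_uminus rel_cong_diff rel_cong_refl rel_cong_mult_left rel_cong_sym[OF psi_square[OF a]])
  also have "\<dots> = - (comm a * psi a)"
    by (simp add: comm_def algebra_simps)
  finally show ?thesis by (simp add: anticommute_mod_def)
qed

lemma psis_comm_anticommute:
  assumes a: "a \<in> {1..N}"
  shows "anticommute_mod Rs (psis a) (comm a)"
proof -
  have "psis a * comm a = psis a * psi a * psis a - (psis a * psis a) * psi a"
    by (simp add: comm_def algebra_simps)
  also have "\<dots> \<approx> psis a * psi a * psis a - 0 * psi a"
    by (intro rel_cong_diff rel_cong_mult_right psis_square[OF a] rel_cong_refl)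
  also have "psis a * psi a * psis a - 0 * psi a = - (psi a * 0 - psis a * psi a * psis a)"
    by simp
  also have "\<dots> \<approx> - (psi a * (psis a * psis a) - psis a * psi a * psis a)"
    by (intro rel_cong_uminus rel_cong_diff rel_cong_refl rel_cong_mult_left rel_cong_sym[OF psis_square[OF a]])
  also have "\<dots> = - (comm a * psis a)"
    by (simp add: comm_def algebra_simps)
  finally show ?thesis by (simp add: anticommute_mod_def)
qed

lemma psi_comm_commute:
  assumes "i \<in> {1..N}" "l \<in> {1..N}" "i \<noteq> l"
  shows "commute_mod Rs (psi l) (comm i)"
  unfolding comm_def using assms psi_psi psi_psis
  by (intro commute_mod_diff anticommute_anticommute_mod_mult) auto

lemma psis_comm_commute:
  assumes "i \<in> {1..N}" "l \<in> {1..N}" "i \<noteq> l"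
  shows "commute_mod Rs (psis l) (comm i)"
  unfolding comm_def using assms psis_psis anticommute_mod_sym[OF psi_psis]
  by (intro commute_mod_diff anticommute_anticommute_mod_mult) auto

lemma om_comm_commute:
  assumes "i \<in> {1..N}" "l \<in> {1..N}"
  shows "commute_mod Rs (om l) (comm i)"
proof -
  have "(if l = i then q else 1) * (if l = i then inverse q else 1) = 1"
    "(if l = i then inverse q else 1) * (if l = i then q else 1) = 1"
    using q_nonzero by auto
  then have "qcommute_mod Rs 1 (om l) (comm i)"
    unfolding comm_def using om_psi[OF assms(2,1)] om_psis[OF assms(2,1)]
    by (metis qcommute_mod_diff qcommute_mod_mult)
  then show ?thesis by (simp add: qcommute_mod_one)
qed

lemma omi_comm_commute:
  assumes "i \<in> {1..N}" "l \<in> {1..N}"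
  shows "commute_mod Rs (omi l) (comm i)"
proof -
  have "inverse (if l = i then q else 1) * inverse (if l = i then inverse q else 1) = 1"
    "inverse (if l = i then inverse q else 1) * inverse (if l = i then q else 1) = 1"
    using q_nonzero by auto
  then have "qcommute_mod Rs 1 (omi l) (comm i)"
    unfolding comm_def using omi_psi[OF assms(2,1)] omi_psis[OF assms(2,1)]
    by (metis qcommute_mod_diff qcommute_mod_mult)
  then show ?thesis by (simp add: qcommute_mod_one)
qed

lemma comm_comm_commute:
  assumes "i \<in> {1..N}" "l \<in> {1..N}"
  shows "commute_mod Rs (comm l) (comm i)"
proof (cases "i = l")
  case False
  have "commute_mod Rs (comm i) (comm l)"
    unfolding comm_def[of l]
    by (rule commute_mod_diff; rule commute_mod_mult; rule commute_mod_sym)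
       (use psi_comm_commute[OF assms False] psis_comm_commute[OF assms False] in auto)
  then show ?thesis by (rule commute_mod_sym)
qed simp

lemma psi_psis_psis_psi: "a \<in> {1..N} \<Longrightarrow> (psi a * psis a) * (psis a * psi a) \<approx> 0"
  using rel_cong_mult_right[OF rel_cong_mult_left[OF psis_square], of a "psi a" "psi a"]
  by (simp add: mult.assoc)

lemma psis_psi_psi_psis: "a \<in> {1..N} \<Longrightarrow> (psis a * psi a) * (psi a * psis a) \<approx> 0"
  using rel_cong_mult_right[OF rel_cong_mult_left[OF psi_square], of a "psis a" "psis a"]
  by (simp add: mult.assoc)

lemma om_power_omi_power: "a \<in> {1..N} \<Longrightarrow> om a ^ n * omi a ^ n \<approx> 1"
proof (induction n)
  case (Suc n)
  have "om a ^ Suc n * omi a ^ Suc n = om a ^ n * (om a * omi a) * omi a ^ n"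
    by (simp only: power_Suc2[of "om a"] power_Suc[of "omi a"] mult.assoc)
  also have "\<dots> \<approx> om a ^ n * 1 * omi a ^ n"
    by (intro rel_cong_mult_right rel_cong_mult_left om_omi Suc.prems)
  also have "om a ^ n * 1 * omi a ^ n \<approx> 1"
    using Suc by simp
  finally show ?case .
qed simp

lemma psi_psis_square:
  assumes a: "a \<in> {1..N}"
  shows "(psi a * psis a) * (psi a * psis a) \<approx> (psi a * psis a) * omi a ^ k"
proof -
  define A where "A = psi a * psis a"
  define B where "B = psis a * psi a"
  define s :: "('h,'k) fa" where "s = scal (q ^ k)"
  have "A * A = A * ((A + s * B) - s * B)" by simp
  also have "\<dots> \<approx> A * (omi a ^ k - s * B)"
    using psi_psis_omi[OF a]
    by (intro rel_cong_mult_left rel_cong_diff rel_cong_refl) (simp add: A_def B_def s_def mult.assoc)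
  also have "A * (omi a ^ k - s * B) = A * omi a ^ k - s * (A * B)"
    unfolding s_def by (simp add: right_diff_distrib mult_scal_left_commute)
  also have "\<dots> \<approx> A * omi a ^ k - s * 0"
    unfolding A_def B_def by (intro rel_cong_diff rel_cong_refl rel_cong_mult_left psi_psis_psis_psi a)
  finally show ?thesis by (simp add: A_def)
qed

lemma psis_psi_square:
  assumes a: "a \<in> {1..N}"
  shows "(psis a * psi a) * (psis a * psi a) \<approx> scal (inverse q ^ k) * (psis a * psi a) * omi a ^ k"
proof -
  define A where "A = psi a * psis a"
  define B where "B = psis a * psi a"
  define s :: "('h,'k) fa" where "s = scal (q ^ k)"
  define t :: "('h,'k) fa" where "t = scal (inverse q ^ k)"
  have "t * s = 1"
    unfolding t_def s_def using q_nonzero by (simp add: scal_mult[symmetric] power_mult_distrib[symmetric])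
  then have "B * B = B * (t * (A + s * B - A))" by (simp add: mult.assoc[symmetric])
  also have "\<dots> \<approx> B * (t * (omi a ^ k - A))"
    using psi_psis_omi[OF a]
    by (intro rel_cong_mult_left rel_cong_diff rel_cong_refl) (simp add: A_def B_def s_def mult.assoc)
  also have "B * (t * (omi a ^ k - A)) = t * (B * omi a ^ k - B * A)"
    unfolding t_def by (simp add: right_diff_distrib mult_scal_left_commute)
  also have "\<dots> \<approx> t * (B * omi a ^ k - 0)"
    unfolding A_def B_def by (intro rel_cong_mult_left rel_cong_diff rel_cong_refl psis_psi_psi_psis a)
  finally show ?thesis by (simp add: B_def t_def mult.assoc)
qed

lemma comm_square:
  assumes a: "a \<in> {1..N}"
  shows "comm a * comm a \<approx> 1"
proof -
  define A where "A = psi a * psis a"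
  define B where "B = psis a * psi a"
  define t :: "('h,'k) fa" where "t = scal (inverse q ^ k)"
  have "comm a * comm a = A * A - A * B - B * A + B * B"
    by (simp add: comm_def A_def B_def algebra_simps)
  also have "\<dots> \<approx> A * omi a ^ k - 0 - 0 + t * B * omi a ^ k"
    unfolding A_def B_def t_def
    by (intro rel_cong_add rel_cong_diff psi_psis_square psis_psi_square psi_psis_psis_psi psis_psi_psi_psis a)
  also have "\<dots> = (A + t * B) * omi a ^ k"
    by (simp add: algebra_simps)
  also have "\<dots> \<approx> om a ^ k * omi a ^ k"
    using psi_psis_om[OF a] by (intro rel_cong_mult_right) (simp add: A_def B_def t_def mult.assoc)
  also have "\<dots> \<approx> 1"
    by (rule om_power_omi_power[OF a])
  finally show ?thesis .
qed

lemma psi_fprod_commute: "r < l \<Longrightarrow> l \<le> N \<Longrightarrow> commute_mod Rs (psi l) (fprod r)"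
  unfolding fprod_def by (rule commute_mod_prod_list) (auto intro!: psi_comm_commute)

lemma psis_fprod_commute: "r < l \<Longrightarrow> l \<le> N \<Longrightarrow> commute_mod Rs (psis l) (fprod r)"
  unfolding fprod_def by (rule commute_mod_prod_list) (auto intro!: psis_comm_commute)

lemma fermion_fprod_anticommute:
  assumes "1 \<le> l" "l \<le> r" "r \<le> N" "C \<in> {Psi, PsiS}"
  shows "anticommute_mod Rs (e (C l)) (fprod r)"
  using assms(1-3)
proof (induction r)
  case (Suc r)
  then have l: "l \<in> {1..N}" and r: "Suc r \<in> {1..N}" by auto
  show ?case
  proof (cases "l = Suc r")
    case True
    then have "commute_mod Rs (e (C l)) (fprod r)" "anticommute_mod Rs (e (C l)) (comm l)"
      using assms(4) Suc.prems psi_fprod_commute[of r l] psis_fprod_commute[of r l]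
        psi_comm_anticommute[OF l] psis_comm_anticommute[OF l] by auto
    then show ?thesis unfolding fprod_Suc True by (rule commute_anticommute_mod_mult)
  next
    case False
    have "anticommute_mod Rs (e (C l)) (fprod r)"
      by (rule Suc.IH) (use Suc.prems False in auto)
    moreover have "commute_mod Rs (e (C l)) (comm (Suc r))"
      using assms(4) False psi_comm_commute[OF r l] psis_comm_commute[OF r l] by auto
    ultimately show ?thesis unfolding fprod_Suc by (rule anticommute_commute_mod_mult)
  qed
qed simp

lemma fermion_fprod_commute:
  "s < x \<Longrightarrow> x \<le> N \<Longrightarrow> C \<in> {Psi, PsiS} \<Longrightarrow> commute_mod Rs (e (C x)) (fprod s)"
  using psi_fprod_commute psis_fprod_commute by auto

lemma om_fprod_commute: "r \<le> N \<Longrightarrow> l \<in> {1..N} \<Longrightarrow> commute_mod Rs (om l) (fprod r)"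
  unfolding fprod_def by (rule commute_mod_prod_list) (auto intro!: om_comm_commute)

lemma omi_fprod_commute: "r \<le> N \<Longrightarrow> l \<in> {1..N} \<Longrightarrow> commute_mod Rs (omi l) (fprod r)"
  unfolding fprod_def by (rule commute_mod_prod_list) (auto intro!: omi_comm_commute)

lemma comm_fprod_commute: "r \<le> N \<Longrightarrow> l \<in> {1..N} \<Longrightarrow> commute_mod Rs (comm l) (fprod r)"
  unfolding fprod_def by (rule commute_mod_prod_list) (auto intro!: comm_comm_commute)

lemma fprod_square: "r \<le> N \<Longrightarrow> fprod r * fprod r \<approx> 1"
proof (induction r)
  case (Suc r)
  then have r: "Suc r \<in> {1..N}" by simp
  have "commute_mod Rs (comm (Suc r)) (fprod r)"
    using Suc.prems r by (intro comm_fprod_commute) auto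
  moreover have "fprod r * fprod r \<approx> 1"
    using Suc by simp
  ultimately show ?case
    unfolding fprod_Suc by (rule involution_mult[OF _ _ comm_square[OF r]])
qed (simp add: fprod_def)

lemma fprod_fprod_commute:
  assumes "r \<le> N" "r' \<le> N"
  shows "commute_mod Rs (fprod r) (fprod r')"
proof -
  have "commute_mod Rs (fprod r') (fprod r)"
    unfolding fprod_def[of r]
    by (rule commute_mod_prod_list, rule commute_mod_sym, rule comm_fprod_commute) (use assms in auto)
  then show ?thesis by (rule commute_mod_sym)
qed

lemma fermion_anticommute:
  "x \<in> {1..N} \<Longrightarrow> y \<in> {1..N} \<Longrightarrow> x \<noteq> y \<Longrightarrow> C \<in> {Psi, PsiS} \<Longrightarrow> D \<in> {Psi, PsiS} \<Longrightarrow>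
   anticommute_mod Rs (e (C x)) (e (D y))"
  using psi_psi psis_psis psi_psis anticommute_mod_sym[OF psi_psis] by auto

lemma omega_commute:
  assumes "x \<in> {1..N}" "y \<in> {1..N}" "V \<in> {Om, OmI}" "W \<in> {Om, OmI}"
  shows "commute_mod Rs (e (V x)) (e (W y))"
  using assms om_om_commute[of x y] omi_om_commute[of x y] commute_mod_sym[OF omi_om_commute[of y x]]
    omi_omi_commute[of x y]
  by auto

lemma omega_twisted_fermion_commute:
  assumes x: "x \<in> {1..N}" and y: "y \<in> {1..N}" and "x \<noteq> y" "s \<le> N"
    and "C \<in> {Psi, PsiS}" "W \<in> {Om, OmI}"
  shows "commute_mod Rs (e (W x)) (fprod s * e (C y))"
proof (rule commute_mod_mult)
  show "commute_mod Rs (e (W x)) (fprod s)"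
    using assms om_fprod_commute[OF _ x] omi_fprod_commute[OF _ x] by auto
  show "commute_mod Rs (e (W x)) (e (C y))"
    using assms om_psi[OF x y] om_psis[OF x y] omi_psi[OF x y] omi_psis[OF x y]
    by (auto simp: qcommute_mod_one)
qed

lemma twisted_fermions_commute:
  assumes "1 \<le> x" "x \<le> s'" "s' < y" "y \<le> N" "s \<le> s'" "C \<in> {Psi, PsiS}" "D \<in> {Psi, PsiS}"
  shows "commute_mod Rs (fprod s * e (C x)) (fprod s' * e (D y))"
proof (rule twisted_commute)
  show "anticommute_mod Rs (e (C x)) (fprod s')"
    by (rule fermion_fprod_anticommute) (use assms in auto)
  show "commute_mod Rs (fprod s) (e (D y))"
    by (rule commute_mod_sym, rule fermion_fprod_commute) (use assms in auto)
  show "commute_mod Rs (fprod s) (fprod s')"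
    by (rule fprod_fprod_commute) (use assms in auto)
  show "anticommute_mod Rs (e (C x)) (e (D y))"
    by (rule fermion_anticommute) (use assms in auto)
qed

lemma twisted_fermions_mult:
  assumes "s < x" "x \<le> N" "s < y" "y \<le> N" "C \<in> {Psi, PsiS}" "D \<in> {Psi, PsiS}"
  shows "(fprod s * e (C x)) * (fprod s * e (D y)) \<approx> e (C x) * e (D y)"
  by (rule twisted_mult; (rule fermion_fprod_commute | rule fprod_square)?) (use assms in auto)

end

definition twist :: "('h,'k::field) fa \<Rightarrow> (cgen \<Rightarrow> ('h,'k) fa) \<Rightarrow> cgen \<Rightarrow> ('h,'k) fa" where
  "twist F e g = (case g of Psi a \<Rightarrow> F * e g | PsiS a \<Rightarrow> F * e g | _ \<Rightarrow> e g)"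

lemma twist_simps [simp]:
  "twist F e (Psi a) = F * e (Psi a)" "twist F e (PsiS a) = F * e (PsiS a)"
  "twist F e (Om a) = e (Om a)" "twist F e (OmI a) = e (OmI a)"
  by (simp_all add: twist_def)

lemma clifford_rels_twist:
  assumes "clifford_rels Rs e q N k"
    and om: "\<And>a. a \<in> {1..N} \<Longrightarrow> commute_mod Rs (e (Om a)) F"
    and psi: "\<And>a. a \<in> {1..N} \<Longrightarrow> commute_mod Rs (e (Psi a)) F"
    and psis: "\<And>a. a \<in> {1..N} \<Longrightarrow> commute_mod Rs (e (PsiS a)) F"
    and F: "rel_cong Rs (F * F) 1"
  shows "clifford_rels Rs (twist F e) q N k"
proof -
  interpret clifford_rels Rs e q N k by fact
  have mult: "rel_cong Rs (twist F e (C a) * twist F e (D b)) (e (C a) * e (D b))"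
    if "C \<in> {Psi, PsiS}" "D \<in> {Psi, PsiS}" "a \<in> {1..N}" "b \<in> {1..N}" for C D a b
    using that twisted_mult[OF _ _ F] psi psis by auto
  have om_twisted: "qcommute_mod Rs \<alpha> (e (Om a)) (F * X)"
    if "a \<in> {1..N}" "qcommute_mod Rs \<alpha> (e (Om a)) X" for a \<alpha> X
    using qcommute_mod_mult[OF om[OF that(1), folded qcommute_mod_one] that(2)] by simp
  show ?thesis
  proof unfold_locales
    fix a b assume a: "a \<in> {1..N}" and b: "b \<in> {1..N}"
    show "anticommute_mod Rs (twist F e (Psi a)) (twist F e (Psi b))"
      by (rule anticommute_mod_transfer[OF mult[of Psi Psi a b] mult[of Psi Psi b a] psi_psi[OF a b]])
         (use a b in auto)
    show "anticommute_mod Rs (twist F e (PsiS a)) (twist F e (PsiS b))"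
      by (rule anticommute_mod_transfer[OF mult[of PsiS PsiS a b] mult[of PsiS PsiS b a] psis_psis[OF a b]])
         (use a b in auto)
    show "anticommute_mod Rs (twist F e (Psi a)) (twist F e (PsiS b))" if "a \<noteq> b"
      by (rule anticommute_mod_transfer[OF mult[of Psi PsiS a b] mult[of PsiS Psi b a] psi_psis[OF a b that]])
         (use a b in auto)
  next
    fix a assume a: "a \<in> {1..N}"
    have "rel_cong Rs (twist F e (Psi a) * twist F e (PsiS a) + scal c * (twist F e (PsiS a) * twist F e (Psi a)))
      (e (Psi a) * e (PsiS a) + scal c * (e (PsiS a) * e (Psi a)))" for c
      using a by (intro rel_cong_add rel_cong_mult_left mult) auto
    then show
      "rel_cong Rs (twist F e (Psi a) * twist F e (PsiS a) + scal (q ^ k) * twist F e (PsiS a) * twist F e (Psi a))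
        (twist F e (OmI a) ^ k)"
      "rel_cong Rs (twist F e (Psi a) * twist F e (PsiS a) + scal (inverse q ^ k) * twist F e (PsiS a) * twist F e (Psi a))
        (twist F e (Om a) ^ k)"
      using psi_psis_omi[OF a] psi_psis_om[OF a] by (auto simp: mult.assoc intro: rel_cong_trans)
  qed (use om_om_commute om_omi omi_om om_twisted om_psi om_psis in simp_all)
qed

lemma clifford_rels_cong:
  assumes "clifford_rels Rs e q N k" "\<And>g. g \<in> cgens N \<Longrightarrow> e' g = e g"
  shows "clifford_rels Rs e' q N k"
proof -
  interpret clifford_rels Rs e q N k by fact
  have [simp]: "e' (C a) = e (C a)" if "a \<in> {1..N}" "C \<in> {Psi, PsiS, Om, OmI}" for a C
    using assms(2) that by (auto simp: cgens_def)
  show ?thesis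
    by unfold_locales
      (simp_all add: om_om_commute om_omi omi_om om_psi om_psis psi_psi psis_psis psi_psis psi_psis_omi psi_psis_om)
qed

lemma clifford_rels_shift:
  assumes "clifford_rels Rs e q N k" "s + n \<le> N"
  shows "clifford_rels Rs (\<lambda>g. e (shift s g)) q n k"
proof -
  interpret clifford_rels Rs e q N k by fact
  have sh: "a + s \<in> {1..N}" if "a \<in> {1..n}" for a
    using that assms(2) by auto
  note rels = om_om_commute[OF sh sh] om_omi[OF sh] omi_om[OF sh] om_psi[OF sh sh] om_psis[OF sh sh]
    psi_psi[OF sh sh] psis_psis[OF sh sh] psi_psis[OF sh sh] psi_psis_omi[OF sh] psi_psis_om[OF sh]
  show ?thesis
    by unfold_locales (simp_all add: rels[simplified] split del: if_split)
qed

definition block :: "nat \<Rightarrow> nat \<Rightarrow> nat" where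
  "block n i = (i - 1) div n + 1"

definition block_pos :: "nat \<Rightarrow> nat \<Rightarrow> nat" where
  "block_pos n i = (i - 1) mod n + 1"

lemma block_shift:
  assumes "x \<in> {1..n}" "1 \<le> j"
  shows "block n (x + (j-1)*n) = j" and "block_pos n (x + (j-1)*n) = x"
proof -
  have e: "x + (j-1)*n - 1 = (x - 1) + n * (j - 1)" using assms by (simp add: mult.commute)
  have "(x - 1 + n * (j - 1)) div n = j - 1" using assms by (subst div_mult_self2) auto
  then show "block n (x + (j-1)*n) = j" using assms unfolding block_def e by simp
  have m: "(x - 1 + n * (j - 1)) mod n = x - 1" using assms by (subst mod_mult_self2) auto
  show "block_pos n (x + (j-1)*n) = x" using assms unfolding block_pos_def e m by simp
qed

lemma block_range:
  assumes "i \<in> {1..n*m}"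
  shows "block n i \<in> {1..m}" "block_pos n i \<in> {1..n}" "i = block_pos n i + (block n i - 1) * n"
proof -
  have "0 < n" using assms by (auto intro: Nat.gr0I)
  then show "block n i \<in> {1..m}" "block_pos n i \<in> {1..n}"
    using assms by (auto simp: block_def block_pos_def less_mult_imp_div_less mult.commute Suc_leI)
  show "i = block_pos n i + (block n i - 1) * n"
    using mod_div_mult_eq[of "i - 1" n] assms unfolding block_pos_def block_def by simp
qed

lemma block_pair_cases:
  fixes a b n m :: nat
  assumes "a \<in> {1..n*m}" "b \<in> {1..n*m}"
  obtains (same) j x y where "j \<in> {1..m}" "x \<in> {1..n}" "y \<in> {1..n}"
      "a = x + (j-1)*n" "b = y + (j-1)*n"
    | (different) j j' x y where "j \<in> {1..m}" "j' \<in> {1..m}" "j \<noteq> j'" "x \<in> {1..n}" "y \<in> {1..n}"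
      "a = x + (j-1)*n" "b = y + (j'-1)*n" "a \<noteq> b"
  using block_range[OF assms(1)] block_range[OF assms(2)] by (metis atLeastAtMost_iff)

lemma clifford_rels_blocks:
  assumes blocks: "\<And>j. j \<in> {1..m} \<Longrightarrow> clifford_rels Rs (\<lambda>g. e (shift ((j-1)*n) g)) q n k"
    and cross_om_om: "\<And>j j' x y. j \<in> {1..m} \<Longrightarrow> j' \<in> {1..m} \<Longrightarrow> j \<noteq> j' \<Longrightarrow> x \<in> {1..n} \<Longrightarrow>
      y \<in> {1..n} \<Longrightarrow> commute_mod Rs (e (Om (x + (j-1)*n))) (e (Om (y + (j'-1)*n)))"
    and cross_om_fermion: "\<And>j j' x y C. j \<in> {1..m} \<Longrightarrow> j' \<in> {1..m} \<Longrightarrow> j \<noteq> j' \<Longrightarrow> x \<in> {1..n} \<Longrightarrow>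
      y \<in> {1..n} \<Longrightarrow> C \<in> {Psi, PsiS} \<Longrightarrow> commute_mod Rs (e (Om (x + (j-1)*n))) (e (C (y + (j'-1)*n)))"
    and cross_fermions: "\<And>j j' x y C D. j \<in> {1..m} \<Longrightarrow> j' \<in> {1..m} \<Longrightarrow> j \<noteq> j' \<Longrightarrow> x \<in> {1..n} \<Longrightarrow>
      y \<in> {1..n} \<Longrightarrow> C \<in> {Psi, PsiS} \<Longrightarrow> D \<in> {Psi, PsiS} \<Longrightarrow>
      anticommute_mod Rs (e (C (x + (j-1)*n))) (e (D (y + (j'-1)*n)))"
  shows "clifford_rels Rs e q (n*m) k"
proof -
  note same_block = clifford_rels.om_om_commute[OF blocks] clifford_rels.om_omi[OF blocks]
    clifford_rels.omi_om[OF blocks] clifford_rels.om_psi[OF blocks] clifford_rels.om_psis[OF blocks]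
    clifford_rels.psi_psi[OF blocks] clifford_rels.psis_psis[OF blocks] clifford_rels.psi_psis[OF blocks]
    clifford_rels.psi_psis_omi[OF blocks] clifford_rels.psi_psis_om[OF blocks]
  (* [simplified] brings the offsets (j - 1) * n into simp normal form (j - Suc 0) * n. *)
  note same = same_block[simplified]
    and cross = cross_om_om[simplified] cross_om_fermion[simplified] cross_fermions[simplified]
  show ?thesis
  proof unfold_locales
    fix a b assume a: "a \<in> {1..n*m}" and b: "b \<in> {1..n*m}"
    show "commute_mod Rs (e (Om a)) (e (Om b))"
      by (rule block_pair_cases[OF a b]) (auto simp: same intro: cross)
    show "qcommute_mod Rs (if a = b then q else 1) (e (Om a)) (e (Psi b))"
      by (rule block_pair_cases[OF a b]) (auto simp: same qcommute_mod_one intro: cross)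
    show "qcommute_mod Rs (if a = b then inverse q else 1) (e (Om a)) (e (PsiS b))"
      by (rule block_pair_cases[OF a b]) (auto simp: same qcommute_mod_one intro: cross)
    show "anticommute_mod Rs (e (Psi a)) (e (Psi b))"
      by (rule block_pair_cases[OF a b]) (auto simp: same intro: cross)
    show "anticommute_mod Rs (e (PsiS a)) (e (PsiS b))"
      by (rule block_pair_cases[OF a b]) (auto simp: same intro: cross)
    show "anticommute_mod Rs (e (Psi a)) (e (PsiS b))" if "a \<noteq> b"
      by (rule block_pair_cases[OF a b])
         (use that in \<open>auto simp: same intro: cross\<close>)
  next
    fix a assume "a \<in> {1..n*m}"
    then obtain j x where "j \<in> {1..m}" "x \<in> {1..n}" "a = x + (j-1)*n"
      using block_range by blast
    then show "rel_cong Rs (e (Om a) * e (OmI a)) 1" "rel_cong Rs (e (OmI a) * e (Om a)) 1"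
      "rel_cong Rs (e (Psi a) * e (PsiS a) + scal (q ^ k) * e (PsiS a) * e (Psi a)) (e (OmI a) ^ k)"
      "rel_cong Rs (e (Psi a) * e (PsiS a) + scal (inverse q ^ k) * e (PsiS a) * e (Psi a)) (e (Om a) ^ k)"
      by (simp_all add: same)
  qed
qed


section \<open>The maps \<Gamma> and \<Gamma>\<inverse> on generators\<close>

lemma cgens_iff [simp]:
  "Psi a \<in> cgens N \<longleftrightarrow> a \<in> {1..N}" "PsiS a \<in> cgens N \<longleftrightarrow> a \<in> {1..N}"
  "Om a \<in> cgens N \<longleftrightarrow> a \<in> {1..N}" "OmI a \<in> cgens N \<longleftrightarrow> a \<in> {1..N}"
  by (auto simp: cgens_def)

lemma tgens_iff [simp]: "(j, g) \<in> tgens n m \<longleftrightarrow> j \<in> {1..m} \<and> g \<in> cgens n"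
  by (simp add: tgens_def)

lemma cgens_cases [consumes 1, case_names fermion omega]:
  assumes "g \<in> cgens n"
  obtains (fermion) C a where "C \<in> {Psi, PsiS}" "a \<in> {1..n}" "g = C a"
    | (omega) W a where "W \<in> {Om, OmI}" "a \<in> {1..n}" "g = W a"
  using assms by (cases g) auto

lemma cl_rels_carrier: "cl_rels q N k \<subseteq> fcarrier (cgens N)"
  unfolding cl_rels_def
  by (auto intro!: fcarrier_diff fcarrier_add fcarrier_mult fcarrier_gen fcarrier_power split: if_splits)

lemma fr_carrier: "r \<le> N \<Longrightarrow> fr r \<in> fcarrier (cgens N)"
  unfolding fr_def by (rule fcarrier_prod_list) (auto intro!: fcarrier_diff fcarrier_mult fcarrier_gen)

lemma in_factor_carrier: "l \<in> {1..m} \<Longrightarrow> x \<in> fcarrier (cgens n) \<Longrightarrow> in_factor l x \<in> fcarrier (tgens n m)"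
  unfolding in_factor_def by (rule fcarrier_free_hom) auto

lemma t_rels_carrier: "t_rels q n m k \<subseteq> fcarrier (tgens n m)"
  unfolding t_rels_def
  using cl_rels_carrier[of q n k] in_factor_carrier[unfolded in_factor_def]
  by (auto intro!: fcarrier_diff fcarrier_mult fcarrier_gen)

lemma in_factor_simps:
  "in_factor l (scal c) = scal c" "in_factor l (gen g) = gen (l, g)"
  "in_factor l (x + y) = in_factor l x + in_factor l y" "in_factor l (x * y) = in_factor l x * in_factor l y"
  by (simp_all add: in_factor_def free_hom_add free_hom_mult)

lemma block_offset_le:
  fixes j m a n :: nat
  assumes "1 \<le> j" "j \<le> m" "a \<le> n"
  shows "a + (j-1)*n \<le> n*m"
proof -
  have "a + (j-1)*n \<le> j * n"
    using assms by (cases j) auto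
  also have "\<dots> \<le> n * m"
    using assms by (simp add: mult.commute)
  finally show ?thesis .
qed

lemma block_offset_le_next:
  fixes j j' a n :: nat
  assumes "1 \<le> j" "j < j'" "a \<le> n"
  shows "a + (j-1)*n \<le> (j'-1)*n"
proof -
  have "a + (j-1)*n \<le> j * n"
    using assms by (cases j) auto
  also have "\<dots> \<le> (j'-1) * n"
    using assms by (intro mult_le_mono1) simp
  finally show ?thesis .
qed

fun gamma_gen :: "nat \<Rightarrow> nat \<times> cgen \<Rightarrow> (cgen,'k::field) fa" where
  "gamma_gen n (j, Psi a) = fr ((j-1)*n) * gen (Psi (a + (j-1)*n))"
| "gamma_gen n (j, PsiS a) = fr ((j-1)*n) * gen (PsiS (a + (j-1)*n))"
| "gamma_gen n (j, Om a) = gen (Om (a + (j-1)*n))"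
| "gamma_gen n (j, OmI a) = gen (OmI (a + (j-1)*n))"

lemma gamma_gen_factor: "(\<lambda>g. gamma_gen n (j, g)) = twist (fr ((j-1)*n)) (\<lambda>g. gen (shift ((j-1)*n) g))"
proof
  fix g show "gamma_gen n (j, g) = twist (fr ((j-1)*n)) (\<lambda>g. gen (shift ((j-1)*n) g)) g"
    by (cases g) simp_all
qed

definition tens_fr :: "nat \<Rightarrow> nat \<Rightarrow> (nat \<times> cgen,'k::field) fa" where
  "tens_fr n j = prod_list (map (\<lambda>l. in_factor l (fr n)) [1..<j])"

fun gamma_inv_gen :: "nat \<Rightarrow> cgen \<Rightarrow> (nat \<times> cgen,'k::field) fa" where
  "gamma_inv_gen n (Psi i) = tens_fr n (block n i) * gen (block n i, Psi (block_pos n i))"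
| "gamma_inv_gen n (PsiS i) = tens_fr n (block n i) * gen (block n i, PsiS (block_pos n i))"
| "gamma_inv_gen n (Om i) = gen (block n i, Om (block_pos n i))"
| "gamma_inv_gen n (OmI i) = gen (block n i, OmI (block_pos n i))"

lemma gamma_inv_gen_shift:
  assumes "j \<in> {1..m}" "g \<in> cgens n"
  shows "gamma_inv_gen n (shift ((j-1)*n) g) = twist (tens_fr n j) (\<lambda>g. gen (j, g)) g"
  using assms by (cases g) (simp_all add: block_shift[simplified])

lemma tens_fr_carrier: "j \<le> m + 1 \<Longrightarrow> tens_fr n j \<in> fcarrier (tgens n m)"
  unfolding tens_fr_def by (rule fcarrier_prod_list) (auto intro!: in_factor_carrier fr_carrier)

lemma gamma_gen_carrier:
  assumes "(j, g) \<in> tgens n m"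
  shows "gamma_gen n (j, g) \<in> fcarrier (cgens (n*m))"
proof -
  have "(j-1)*n \<le> n*m" "a + (j-1)*n \<in> {1..n*m}" if "a \<in> {1..n}" for a
    using assms that block_offset_le[of j m a n] block_offset_le[of j m 0 n] by auto
  then show ?thesis
    using assms by (cases g) (auto intro!: fcarrier_mult fcarrier_gen fr_carrier)
qed

lemma gamma_inv_gen_carrier:
  assumes "g \<in> cgens (n*m)"
  shows "gamma_inv_gen n g \<in> fcarrier (tgens n m)"
proof -
  have "block n i \<in> {1..m}" "block_pos n i \<in> {1..n}" "block n i \<le> m + 1" if "i \<in> {1..n*m}" for i
    using block_range[OF that] by auto
  then show ?thesis
    using assms by (cases g) (auto intro!: fcarrier_mult fcarrier_gen tens_fr_carrier)
qed

lemma prod_list_upt_blocks: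
  fixes f :: "nat \<Rightarrow> 'a::monoid_mult"
  shows "prod_list (map f [1..<(j-1)*n+1]) =
    prod_list (map (\<lambda>l. prod_list (map (\<lambda>a. f (a + (l-1)*n)) [1..<n+1])) [1..<j])"
proof (induction j)
  case (Suc j)
  show ?case
  proof (cases "j = 0")
    case False
    have e: "(Suc j - 1) * n + 1 = ((j-1)*n + 1) + n" using False by (cases j) auto
    have "[1..<(Suc j - 1) * n + 1] = [1..<(j-1)*n+1] @ [(j-1)*n+1..<((j-1)*n + 1) + n]"
      unfolding e by (rule upt_add_eq_append) simp
    moreover have "map (\<lambda>a. f (a + s)) [i..<i'] = map f [i+s..<i'+s]" for s i i'
      by (induction i') auto
    then have "map f [(j-1)*n+1..<((j-1)*n + 1) + n] = map (\<lambda>a. f (a + (j-1)*n)) [1..<n+1]"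
      by (metis add.commute add.left_commute)
    moreover have "[1..<Suc j] = [1..<j] @ [j]" using False by simp
    ultimately show ?thesis using Suc.IH by simp
  qed simp
qed simp

locale tensor_clifford =
  fixes q :: "'k::field" and n m k :: nat
  assumes two_nonzero: "(2::'k) \<noteq> 0" and q_nonzero: "q \<noteq> 0"
begin

sublocale CL: clifford_rep "cl_rels q (n*m) k" gen q "n*m" k
  using clifford_rels_gen two_nonzero q_nonzero by (simp add: clifford_rep_def clifford_rep_axioms_def)

lemma fr_eq_fprod: "fr r = CL.fprod r"
  using CL.free_hom_fr[of r] by (simp add: free_hom_gen_id)

lemma factor_clifford_rep: "l \<in> {1..m} \<Longrightarrow> clifford_rep (t_rels q n m k) (\<lambda>g. gen (l, g)) q n k"
  unfolding clifford_rep_def clifford_rep_axioms_def clifford_rels_iff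
  using two_nonzero q_nonzero by (auto simp: t_rels_def intro!: rel_ideal.generator)

lemma gamma_gen_factor_rels:
  assumes j: "j \<in> {1..m}"
  shows "clifford_rels (cl_rels q (n*m) k) (\<lambda>g. gamma_gen n (j, g)) q n k"
proof -
  let ?s = "(j-1)*n"
  have s: "?s + n \<le> n*m" "?s \<le> n*m"
    using block_offset_le[of j m n n] block_offset_le[of j m 0 n] j by (simp_all add: add.commute)
  show ?thesis
    unfolding gamma_gen_factor
  proof (rule clifford_rels_twist[OF clifford_rels_shift[OF clifford_rels_gen s(1)]])
    fix a assume "a \<in> {1..n}"
    then have a: "a + ?s \<in> {1..n*m}" "?s < a + ?s" using s by auto
    show "commute_mod (cl_rels q (n*m) k) (gen (shift ?s (Om a))) (fr ?s)"
      using CL.om_fprod_commute[OF s(2) a(1)] by (simp add: fr_eq_fprod)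
    show "commute_mod (cl_rels q (n*m) k) (gen (shift ?s (Psi a))) (fr ?s)"
      "commute_mod (cl_rels q (n*m) k) (gen (shift ?s (PsiS a))) (fr ?s)"
      using CL.fermion_fprod_commute[OF a(2)] a(1) by (simp_all add: fr_eq_fprod)
  next
    show "rel_cong (cl_rels q (n*m) k) (fr ?s * fr ?s) 1"
      using CL.fprod_square[OF s(2)] by (simp add: fr_eq_fprod)
  qed
qed

lemma gamma_gen_cross_commute:
  assumes j: "j \<in> {1..m}" and j': "j' \<in> {1..m}" and "j < j'"
    and g: "g \<in> cgens n" and g': "g' \<in> cgens n"
  shows "commute_mod (cl_rels q (n*m) k) (gamma_gen n (j, g)) (gamma_gen n (j', g'))"
proof -
  let ?s = "(j-1)*n" and ?s' = "(j'-1)*n"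
  have x: "x + ?s \<in> {1..n*m}" "?s < x + ?s" "x + ?s \<le> ?s'" if "x \<in> {1..n}" for x
    using that block_offset_le[of j m x n] block_offset_le_next[of j j' x n] j \<open>j < j'\<close> by auto
  have y: "y + ?s' \<in> {1..n*m}" "?s' < y + ?s'" if "y \<in> {1..n}" for y
    using that block_offset_le[of j' m y n] j' by auto
  have s: "?s \<le> n*m" "?s' \<le> n*m" "?s \<le> ?s'"
    using block_offset_le[of j m 0 n] block_offset_le[of j' m 0 n] j j' \<open>j < j'\<close> by auto
  show ?thesis
  proof (cases rule: cgens_cases[OF g]; cases rule: cgens_cases[OF g'])
    fix C D a b assume "C \<in> {Psi, PsiS}" "a \<in> {1..n}" "g = C a" "D \<in> {Psi, PsiS}" "b \<in> {1..n}" "g' = D b"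
    then show ?thesis
      using x[of a] y[of b] s by (auto simp: fr_eq_fprod intro!: CL.twisted_fermions_commute)
  next
    fix C W a b assume "C \<in> {Psi, PsiS}" "a \<in> {1..n}" "g = C a" "W \<in> {Om, OmI}" "b \<in> {1..n}" "g' = W b"
    then show ?thesis
      using x[of a] y[of b] s
      by (auto simp: fr_eq_fprod intro!: commute_mod_sym[OF CL.omega_twisted_fermion_commute])
  next
    fix V D a b assume "V \<in> {Om, OmI}" "a \<in> {1..n}" "g = V a" "D \<in> {Psi, PsiS}" "b \<in> {1..n}" "g' = D b"
    then show ?thesis
      using x[of a] y[of b] s by (auto simp: fr_eq_fprod intro!: CL.omega_twisted_fermion_commute)
  next
    fix V W a b assume "V \<in> {Om, OmI}" "a \<in> {1..n}" "g = V a" "W \<in> {Om, OmI}" "b \<in> {1..n}" "g' = W b"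
    then show ?thesis
      using x[of a] y[of b] by (auto intro!: CL.omega_commute)
  qed
qed

lemma gamma_gen_rels:
  assumes "r \<in> t_rels q n m k"
  shows "free_hom (gamma_gen n) r \<in> rel_ideal (cl_rels q (n*m) k)"
  using assms unfolding t_rels_def
proof (elim UnE UN_E imageE CollectE exE conjE)
  fix j r0 assume "j \<in> {1..m}" "r0 \<in> cl_rels q n k" "r = free_hom (\<lambda>g. gen (j, g)) r0"
  then show ?thesis
    using gamma_gen_factor_rels[of j, unfolded clifford_rels_iff] by (simp add: free_hom_free_hom)
next
  fix j j' g g' assume "r = gen (j, g) * gen (j', g') - gen (j', g') * gen (j, g)"
    "j \<in> {1..m}" "j' \<in> {1..m}" "j \<noteq> j'" "g \<in> cgens n" "g' \<in> cgens n"
  moreover from this have "commute_mod (cl_rels q (n*m) k) (gamma_gen n (j, g)) (gamma_gen n (j', g'))"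
    using gamma_gen_cross_commute[of j j' g g'] gamma_gen_cross_commute[of j' j g' g]
    by (cases "j < j'") (auto intro: commute_mod_sym)
  ultimately show ?thesis by (simp add: commute_mod_def rel_cong_def free_hom_simps)
qed

lemma gen_cross_commute:
  "j \<in> {1..m} \<Longrightarrow> l \<in> {1..m} \<Longrightarrow> j \<noteq> l \<Longrightarrow> g \<in> cgens n \<Longrightarrow> g' \<in> cgens n \<Longrightarrow>
   commute_mod (t_rels q n m k) (gen (j, g)) (gen (l, g'))"
  unfolding commute_mod_def rel_cong_def by (rule rel_ideal.generator) (unfold t_rels_def, rule UnI2, blast)

lemma gen_in_factor_cross_commute:
  assumes "j \<in> {1..m}" "l \<in> {1..m}" "j \<noteq> l" "g \<in> cgens n" "x \<in> fcarrier (cgens n)"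
  shows "commute_mod (t_rels q n m k) (gen (j, g)) (in_factor l x)"
  using assms(5)
  by (induction rule: fcarrier_induct)
     (use assms gen_cross_commute in \<open>simp_all add: in_factor_simps commute_mod_add commute_mod_mult\<close>)

lemma in_factor_cross_commute:
  assumes "j \<in> {1..m}" "l \<in> {1..m}" "j \<noteq> l" "x \<in> fcarrier (cgens n)" "y \<in> fcarrier (cgens n)"
  shows "commute_mod (t_rels q n m k) (in_factor j x) (in_factor l y)"
  using assms(4)
proof (induction rule: fcarrier_induct)
  case (gen g)
  then show ?case using gen_in_factor_cross_commute assms by (simp add: in_factor_simps)
next
  case (add x y)
  then show ?case by (simp add: in_factor_simps commute_mod_sym commute_mod_add)
next
  case (mult x y)
  then show ?case by (simp add: in_factor_simps commute_mod_sym commute_mod_mult)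
qed (simp add: in_factor_simps commute_mod_sym)

lemma fr_factor_commute:
  "i \<in> {1..m} \<Longrightarrow> l \<in> {1..m} \<Longrightarrow>
   commute_mod (t_rels q n m k) (in_factor i (fr n)) (in_factor l (fr n))"
  by (cases "i = l") (auto intro!: in_factor_cross_commute fr_carrier)

lemma tens_fr_Suc: "1 \<le> j \<Longrightarrow> tens_fr n (Suc j) = tens_fr n j * in_factor j (fr n)"
  by (simp add: tens_fr_def)

lemma gen_tens_fr_commute:
  "l \<in> {1..m} \<Longrightarrow> g \<in> cgens n \<Longrightarrow> j \<le> l \<Longrightarrow> commute_mod (t_rels q n m k) (gen (l, g)) (tens_fr n j)"
  unfolding tens_fr_def
  by (rule commute_mod_prod_list, rule gen_in_factor_cross_commute) (auto intro: fr_carrier)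

lemma om_tens_fr_commute:
  assumes l: "l \<in> {1..m}" and "a \<in> {1..n}" "j \<le> m + 1"
  shows "commute_mod (t_rels q n m k) (gen (l, Om a)) (tens_fr n j)"
  unfolding tens_fr_def
proof (rule commute_mod_prod_list)
  interpret F: clifford_rep "t_rels q n m k" "\<lambda>g. gen (l, g)" q n k by (rule factor_clifford_rep[OF l])
  have "in_factor l (fr n) = F.fprod n" unfolding in_factor_def by (rule F.free_hom_fr)
  moreover fix i assume "i \<in> set [1..<j]"
  ultimately show "commute_mod (t_rels q n m k) (gen (l, Om a)) (in_factor i (fr n))"
    using assms F.om_fprod_commute[of n a]
    by (cases "i = l") (auto intro!: gen_in_factor_cross_commute fr_carrier)
qed

lemma fermion_tens_fr_anticommute:
  assumes l: "l \<in> {1..m}" and C: "C \<in> {Psi, PsiS}" and a: "a \<in> {1..n}"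
  shows "l < j \<Longrightarrow> j \<le> m + 1 \<Longrightarrow> anticommute_mod (t_rels q n m k) (gen (l, C a)) (tens_fr n j)"
proof (induction j)
  case (Suc j)
  interpret F: clifford_rep "t_rels q n m k" "\<lambda>g. gen (l, g)" q n k by (rule factor_clifford_rep[OF l])
  have j: "1 \<le> j" using Suc.prems l by auto
  show ?case
  proof (cases "l = j")
    case True
    have "commute_mod (t_rels q n m k) (gen (l, C a)) (tens_fr n j)"
      using l C a True by (intro gen_tens_fr_commute) auto
    moreover have "anticommute_mod (t_rels q n m k) (gen (l, C a)) (in_factor l (fr n))"
      using F.fermion_fprod_anticommute[of a n C] C a by (auto simp: in_factor_def F.free_hom_fr)
    ultimately show ?thesis unfolding tens_fr_Suc[OF j] True by (rule commute_anticommute_mod_mult)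
  next
    case False
    then have "anticommute_mod (t_rels q n m k) (gen (l, C a)) (tens_fr n j)" using Suc by auto
    moreover have "commute_mod (t_rels q n m k) (gen (l, C a)) (in_factor j (fr n))"
      using l C a False Suc.prems j by (intro gen_in_factor_cross_commute fr_carrier) auto
    ultimately show ?thesis unfolding tens_fr_Suc[OF j] by (rule anticommute_commute_mod_mult)
  qed
qed simp

lemma tens_fr_square: "j \<le> m + 1 \<Longrightarrow> rel_cong (t_rels q n m k) (tens_fr n j * tens_fr n j) 1"
proof (induction j)
  case (Suc j)
  show ?case
  proof (cases "j = 0")
    case False
    then have j: "1 \<le> j" "j \<in> {1..m}" using Suc.prems by auto
    interpret F: clifford_rep "t_rels q n m k" "\<lambda>g. gen (j, g)" q n k by (rule factor_clifford_rep[OF j(2)])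
    have "commute_mod (t_rels q n m k) (in_factor j (fr n)) (tens_fr n j)"
      unfolding tens_fr_def by (rule commute_mod_prod_list, rule fr_factor_commute) (use j in auto)
    then show ?thesis unfolding tens_fr_Suc[OF j(1)]
      by (rule involution_mult) (use Suc F.fprod_square[of n] in \<open>auto simp: in_factor_def F.free_hom_fr\<close>)
  qed (simp add: tens_fr_def)
qed (simp add: tens_fr_def)

lemma tens_fr_commute:
  "j \<le> m + 1 \<Longrightarrow> j' \<le> m + 1 \<Longrightarrow> commute_mod (t_rels q n m k) (tens_fr n j) (tens_fr n j')"
  unfolding tens_fr_def[of n j']
  by (rule commute_mod_prod_list, rule commute_mod_sym, unfold tens_fr_def,
      rule commute_mod_prod_list, rule fr_factor_commute) auto

lemma twisted_gens_anticommute: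
  assumes "j < j'" "j \<in> {1..m}" "j' \<in> {1..m}" "x \<in> {1..n}" "y \<in> {1..n}"
    "C \<in> {Psi, PsiS}" "D \<in> {Psi, PsiS}"
  shows "anticommute_mod (t_rels q n m k) (tens_fr n j * gen (j, C x)) (tens_fr n j' * gen (j', D y))"
proof (rule twisted_anticommute)
  show "anticommute_mod (t_rels q n m k) (gen (j, C x)) (tens_fr n j')"
    by (rule fermion_tens_fr_anticommute) (use assms in auto)
  show "commute_mod (t_rels q n m k) (tens_fr n j) (gen (j', D y))"
    by (rule commute_mod_sym, rule gen_tens_fr_commute) (use assms in auto)
  show "commute_mod (t_rels q n m k) (tens_fr n j) (tens_fr n j')"
    by (rule tens_fr_commute) (use assms in auto)
  show "commute_mod (t_rels q n m k) (gen (j, C x)) (gen (j', D y))"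
    by (rule gen_cross_commute) (use assms in auto)
qed

lemma gamma_inv_gen_factor_rels:
  assumes j: "j \<in> {1..m}"
  shows "clifford_rels (t_rels q n m k) (\<lambda>g. gamma_inv_gen n (shift ((j-1)*n) g)) q n k"
proof (rule clifford_rels_cong[OF clifford_rels_twist])
  show "clifford_rels (t_rels q n m k) (\<lambda>g. gen (j, g)) q n k"
    using factor_clifford_rep[OF j] by (simp add: clifford_rep_def)
  fix a assume "a \<in> {1..n}"
  then show "commute_mod (t_rels q n m k) (gen (j, Om a)) (tens_fr n j)"
    "commute_mod (t_rels q n m k) (gen (j, Psi a)) (tens_fr n j)"
    "commute_mod (t_rels q n m k) (gen (j, PsiS a)) (tens_fr n j)"
    using j by (auto intro!: gen_tens_fr_commute)
next
  show "rel_cong (t_rels q n m k) (tens_fr n j * tens_fr n j) 1"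
    using j by (intro tens_fr_square) auto
qed (use gamma_inv_gen_shift[OF j] in auto)

lemma gamma_inv_gen_rels: "clifford_rels (t_rels q n m k) (gamma_inv_gen n) q (n*m) k"
proof (rule clifford_rels_blocks[OF gamma_inv_gen_factor_rels])
  fix j j' x y assume jj: "j \<in> {1..m}" "j' \<in> {1..m}" "j \<noteq> j'" and xy: "x \<in> {1..n}" "y \<in> {1..n}"
  note block = block_shift[OF xy(1), of j] block_shift[OF xy(2), of j']
  show "commute_mod (t_rels q n m k) (gamma_inv_gen n (Om (x + (j-1)*n))) (gamma_inv_gen n (Om (y + (j'-1)*n)))"
    using jj xy block by (simp add: gen_cross_commute)
  show "commute_mod (t_rels q n m k) (gamma_inv_gen n (Om (x + (j-1)*n))) (gamma_inv_gen n (C (y + (j'-1)*n)))"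
    if "C \<in> {Psi, PsiS}" for C
    using that jj xy block
    by (auto intro!: commute_mod_mult om_tens_fr_commute gen_cross_commute)
  show "anticommute_mod (t_rels q n m k) (gamma_inv_gen n (C (x + (j-1)*n))) (gamma_inv_gen n (D (y + (j'-1)*n)))"
    if "C \<in> {Psi, PsiS}" "D \<in> {Psi, PsiS}" for C D
  proof (cases "j < j'")
    case True
    then show ?thesis using that jj xy block by (auto intro!: twisted_gens_anticommute)
  next
    case False
    then show ?thesis using that jj xy block
      by (auto intro!: anticommute_mod_sym[OF twisted_gens_anticommute])
  qed
qed

lemma twisted_gens_mult:
  assumes "j \<in> {1..m}" "g \<in> cgens n" "g' \<in> cgens n"
  shows "rel_cong (t_rels q n m k) ((tens_fr n j * gen (j, g)) * (tens_fr n j * gen (j, g'))) (gen (j, g) * gen (j, g'))"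
  using assms by (intro twisted_mult gen_tens_fr_commute tens_fr_square) auto

lemma gamma_inv_fr:
  assumes j: "j \<in> {1..m}"
  shows "rel_cong (t_rels q n m k) (free_hom (gamma_inv_gen n) (fr ((j-1)*n))) (tens_fr n j)"
proof -
  let ?c = "\<lambda>i. gamma_inv_gen n (Psi i) * gamma_inv_gen n (PsiS i) - gamma_inv_gen n (PsiS i) * gamma_inv_gen n (Psi i)"
  have "free_hom (gamma_inv_gen n) (fr ((j-1)*n)) = prod_list (map ?c [1..<(j-1)*n+1])"
    unfolding fr_def by (simp add: free_hom_simps comp_def)
  also have "\<dots> = prod_list (map (\<lambda>l. prod_list (map (\<lambda>a. ?c (a + (l-1)*n)) [1..<n+1])) [1..<j])"
    by (rule prod_list_upt_blocks)
  finally have blocks: "free_hom (gamma_inv_gen n) (fr ((j-1)*n)) =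
    prod_list (map (\<lambda>l. prod_list (map (\<lambda>a. ?c (a + (l-1)*n)) [1..<n+1])) [1..<j])" .
  have "rel_cong (t_rels q n m k)
    (prod_list (map (\<lambda>l. prod_list (map (\<lambda>a. ?c (a + (l-1)*n)) [1..<n+1])) [1..<j]))
    (prod_list (map (\<lambda>l. in_factor l (fr n)) [1..<j]))"
  proof (rule rel_cong_prod_list)
    fix l assume "l \<in> set [1..<j]"
    then have l: "l \<in> {1..m}" using j by auto
    have blockwise: "rel_cong (t_rels q n m k) (?c (a + (l-1)*n))
        (gen (l, Psi a) * gen (l, PsiS a) - gen (l, PsiS a) * gen (l, Psi a))" if "a \<in> set [1..<n+1]" for a
    proof -
      have a: "a \<in> {1..n}" and "1 \<le> l" using that l by auto
      show ?thesis
        unfolding gamma_inv_gen.simps block_shift[OF a \<open>1 \<le> l\<close>] using a l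
        by (intro rel_cong_diff twisted_gens_mult) auto
    qed
    have fr_l: "in_factor l (fr n) =
        prod_list (map (\<lambda>a. gen (l, Psi a) * gen (l, PsiS a) - gen (l, PsiS a) * gen (l, Psi a)) [1..<n+1])"
      unfolding in_factor_def fr_def by (simp add: free_hom_simps comp_def)
    show "rel_cong (t_rels q n m k) (prod_list (map (\<lambda>a. ?c (a + (l-1)*n)) [1..<n+1])) (in_factor l (fr n))"
      unfolding fr_l by (rule rel_cong_prod_list, rule blockwise)
  qed
  then show ?thesis unfolding blocks tens_fr_def .
qed

lemma gamma_inv_gamma_gen:
  assumes "g \<in> tgens n m"
  shows "rel_cong (t_rels q n m k) (free_hom (gamma_inv_gen n) (gamma_gen n g)) (gen g)"
proof -
  obtain j c where g: "g = (j, c)" and j: "j \<in> {1..m}" and c: "c \<in> cgens n"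
    using assms by (cases g) auto
  from c show ?thesis
  proof (cases rule: cgens_cases)
    case (fermion C a)
    have "free_hom (gamma_inv_gen n) (gamma_gen n (j, C a)) =
        free_hom (gamma_inv_gen n) (fr ((j-1)*n)) * (tens_fr n j * gen (j, C a))"
      using fermion j by (auto simp: free_hom_mult block_shift[simplified])
    also have "rel_cong (t_rels q n m k) \<dots> ((tens_fr n j * tens_fr n j) * gen (j, C a))"
      unfolding mult.assoc by (intro rel_cong_mult_right gamma_inv_fr j)
    also have "rel_cong (t_rels q n m k) \<dots> (1 * gen (j, C a))"
      using j by (intro rel_cong_mult_right tens_fr_square) auto
    finally show ?thesis using fermion g by simp
  next
    case (omega W a)
    then show ?thesis using g j by (auto simp: block_shift[simplified])
  qed
qed

lemma gamma_fr_factor: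
  assumes l: "l \<in> {1..m}"
  shows "rel_cong (cl_rels q (n*m) k) (free_hom (gamma_gen n) (in_factor l (fr n)))
    (prod_list (map (\<lambda>a. CL.comm (a + (l-1)*n)) [1..<n+1]))"
proof -
  have "free_hom (gamma_gen n) (in_factor l (fr n)) =
      prod_list (map (\<lambda>a. gamma_gen n (l, Psi a) * gamma_gen n (l, PsiS a) -
        gamma_gen n (l, PsiS a) * gamma_gen n (l, Psi a)) [1..<n+1])"
    unfolding in_factor_def fr_def by (simp add: free_hom_free_hom free_hom_simps comp_def)
  also have "rel_cong (cl_rels q (n*m) k) \<dots> (prod_list (map (\<lambda>a. CL.comm (a + (l-1)*n)) [1..<n+1]))"
  proof (rule rel_cong_prod_list)
    fix a assume "a \<in> set [1..<n+1]"
    then have "a + (l-1)*n \<le> n*m" "(l-1)*n < a + (l-1)*n" using block_offset_le[of l m a n] l by auto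
    then show "rel_cong (cl_rels q (n*m) k)
        (gamma_gen n (l, Psi a) * gamma_gen n (l, PsiS a) - gamma_gen n (l, PsiS a) * gamma_gen n (l, Psi a))
        (CL.comm (a + (l-1)*n))"
      unfolding gamma_gen.simps fr_eq_fprod CL.comm_def
      by (intro rel_cong_diff CL.twisted_fermions_mult) auto
  qed
  finally show ?thesis .
qed

lemma gamma_tens_fr:
  assumes j: "j \<in> {1..m}"
  shows "rel_cong (cl_rels q (n*m) k) (free_hom (gamma_gen n) (tens_fr n j)) (fr ((j-1)*n))"
proof -
  have "rel_cong (cl_rels q (n*m) k) (free_hom (gamma_gen n) (tens_fr n j))
     (prod_list (map (\<lambda>l. prod_list (map (\<lambda>a. CL.comm (a + (l-1)*n)) [1..<n+1])) [1..<j]))"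
    unfolding tens_fr_def free_hom_prod_list map_map comp_def
    by (rule rel_cong_prod_list, rule gamma_fr_factor) (use j in auto)
  also have "prod_list (map (\<lambda>l. prod_list (map (\<lambda>a. CL.comm (a + (l-1)*n)) [1..<n+1])) [1..<j]) =
      fr ((j-1)*n)"
    unfolding fr_eq_fprod CL.fprod_def by (rule prod_list_upt_blocks[symmetric])
  finally show ?thesis .
qed

lemma gamma_gamma_inv_gen:
  assumes "g \<in> cgens (n*m)"
  shows "rel_cong (cl_rels q (n*m) k) (free_hom (gamma_gen n) (gamma_inv_gen n g)) (gen g)"
proof -
  obtain i where i: "i \<in> {1..n*m}" and gi: "g \<in> {Psi i, PsiS i, Om i, OmI i}"
    using assms by (cases g) auto
  define j where "j = block n i"
  define x where "x = block_pos n i"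
  have j: "j \<in> {1..m}" and ix: "x + (j-1)*n = i" and s: "(j-1)*n \<le> n*m"
    using block_range[OF i] block_offset_le[of j m 0 n] unfolding j_def x_def by auto
  have fermion: "rel_cong (cl_rels q (n*m) k) (free_hom (gamma_gen n) (gamma_inv_gen n (C i))) (gen (C i))"
    if "C \<in> {Psi, PsiS}" for C
  proof -
    have "free_hom (gamma_gen n) (gamma_inv_gen n (C i)) =
        free_hom (gamma_gen n) (tens_fr n j) * (fr ((j-1)*n) * gen (C i))"
      using that ix by (auto simp: j_def x_def free_hom_mult)
    also have "rel_cong (cl_rels q (n*m) k) \<dots> ((fr ((j-1)*n) * fr ((j-1)*n)) * gen (C i))"
      unfolding mult.assoc by (intro rel_cong_mult_right gamma_tens_fr j)
    also have "rel_cong (cl_rels q (n*m) k) \<dots> (1 * gen (C i))"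
      unfolding fr_eq_fprod by (intro rel_cong_mult_right CL.fprod_square s)
    finally show ?thesis by simp
  qed
  show ?thesis
    using gi fermion ix by (auto simp: j_def x_def)
qed

end


section \<open>Gradings\<close>

lemma homog_zero [simp]: "homog dg d 0"
  by (simp add: homog_def)

lemma homog_add: "homog dg d x \<Longrightarrow> homog dg d y \<Longrightarrow> homog dg d (x + y)"
  unfolding homog_def using keys_add[of x y] by blast

lemma homog_diff: "homog dg d x \<Longrightarrow> homog dg d y \<Longrightarrow> homog dg d (x - y)"
  unfolding homog_def using keys_diff[of x y] by blast

lemma homog_mult: "homog dg d1 x \<Longrightarrow> homog dg d2 y \<Longrightarrow> d = (\<lambda>i. d1 i + d2 i) \<Longrightarrow> homog dg d (x * y)"
  unfolding homog_def using keys_mult[of x y] by (fastforce simp: wdeg_def)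

lemma homog_scal: "homog dg (\<lambda>i. 0) (scal c)"
  unfolding homog_def scal_def by (simp add: wdeg_def)

lemma homog_one: "homog dg (\<lambda>i. 0) 1"
  using homog_scal[of dg 1] by simp

lemma homog_gen: "d = dg g \<Longrightarrow> homog dg d (gen g)"
  unfolding homog_def gen_def by (simp add: wdeg_def)

lemma homog_sum: "(\<And>x. x \<in> A \<Longrightarrow> homog dg d (f x)) \<Longrightarrow> homog dg d (sum f A)"
  by (induction A rule: infinite_finite_induct) (auto intro: homog_add)

lemma homog_free_hom:
  assumes hg: "\<And>g. g \<in> G \<Longrightarrow> homog dg2 (dg1 g) (h g)" and p: "p \<in> fcarrier G" and hp: "homog dg1 d p"
  shows "homog dg2 d (free_hom h p)"
proof -
  have word: "homog dg2 (wdeg dg1 (Wd xs)) (prod_list (map h xs))" if "set xs \<subseteq> G" for xs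
    using that
  proof (induction xs)
    case Nil
    then show ?case by (simp add: wdeg_def homog_one)
  next
    case (Cons x xs)
    then show ?case
      by (simp only: list.map prod_list.Cons) (rule homog_mult[OF hg], auto simp: wdeg_def)
  qed
  show ?thesis
    unfolding free_hom_def
  proof (rule homog_sum)
    fix w assume w: "w \<in> Poly_Mapping.keys p"
    have G: "set (letters w) \<subseteq> G" and d: "wdeg dg1 w = d"
      using w p hp by (auto simp: fcarrier_iff homog_def)
    show "homog dg2 d (scal (Poly_Mapping.lookup p w) * eval_word h w)"
      by (rule homog_mult[OF homog_scal word[OF G]]) (cases w, simp add: d[symmetric])
  qed
qed

lemma homog_fr: "homog cdeg (\<lambda>i. 0) (fr r :: (cgen,'k::field) fa)"
proof -
  have prod: "homog cdeg (\<lambda>i. 0) (prod_list xs)" if "\<And>x. x \<in> set xs \<Longrightarrow> homog cdeg (\<lambda>i. 0) x"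
    for xs :: "(cgen,'k) fa list"
    using that by (induction xs) (auto intro!: homog_mult[of cdeg "\<lambda>i. 0" _ "\<lambda>i. 0"] homog_one)
  have "homog cdeg (\<lambda>i. 0) (gen (Psi a) * gen (PsiS a) - gen (PsiS a) * gen (Psi a) :: (cgen,'k) fa)" for a
    by (intro homog_diff; rule homog_mult[OF homog_gen homog_gen]) auto
  then show ?thesis unfolding fr_def by (intro prod) auto
qed

lemma homog_gamma_gen: "homog cdeg (tdeg n g) (gamma_gen n g :: (cgen,'k::field) fa)"
proof (cases g)
  case (Pair j c)
  then show ?thesis by (cases c) (auto simp: tdeg_def intro!: homog_mult[OF homog_fr homog_gen] homog_gen)
qed


section \<open>The isomorphism\<close>

context tensor_clifford
begin

definition Gamma :: "(nat \<times> cgen,'k) fa set \<Rightarrow> (cgen,'k) fa set" where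
  "Gamma = induced_map (tgens n m) (t_rels q n m k) (cgens (n*m)) (cl_rels q (n*m) k) (gamma_gen n)"

definition Gamma_inv :: "(cgen,'k) fa set \<Rightarrow> (nat \<times> cgen,'k) fa set" where
  "Gamma_inv = induced_map (cgens (n*m)) (cl_rels q (n*m) k) (tgens n m) (t_rels q n m k) (gamma_inv_gen n)"

lemma presentation_hom_gamma:
  "presentation_hom (tgens n m) (t_rels q n m k) (cgens (n*m)) (cl_rels q (n*m) k) (gamma_gen n)"
  by unfold_locales
    (auto intro: t_rels_carrier[THEN subsetD] cl_rels_carrier[THEN subsetD] gamma_gen_carrier gamma_gen_rels)

lemma presentation_hom_gamma_inv:
  "presentation_hom (cgens (n*m)) (cl_rels q (n*m) k) (tgens n m) (t_rels q n m k) (gamma_inv_gen n)"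
  using gamma_inv_gen_rels[unfolded clifford_rels_iff]
  by unfold_locales
    (auto intro: t_rels_carrier[THEN subsetD] cl_rels_carrier[THEN subsetD] gamma_inv_gen_carrier)

lemma Gamma_tcls:
  "p \<in> fcarrier (tgens n m) \<Longrightarrow> Gamma (tcls q n m k p) = clcls q (n*m) k (free_hom (gamma_gen n) p)"
  unfolding Gamma_def tcls_def clcls_def by (rule presentation_hom.induced_map_cls[OF presentation_hom_gamma])

lemma Gamma_inv_clcls:
  "p \<in> fcarrier (cgens (n*m)) \<Longrightarrow> Gamma_inv (clcls q (n*m) k p) = tcls q n m k (free_hom (gamma_inv_gen n) p)"
  unfolding Gamma_inv_def tcls_def clcls_def by (rule presentation_hom.induced_map_cls[OF presentation_hom_gamma_inv])

lemma Gamma_tcls_gen: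
  "(j, g) \<in> tgens n m \<Longrightarrow> Gamma (tcls q n m k (gen (j, g))) = clcls q (n*m) k (gamma_gen n (j, g))"
  by (simp add: Gamma_tcls)

lemma Gamma_inv_clcls_gen:
  assumes "j \<in> {1..m}" "a \<in> {1..n}"
  shows "Gamma_inv (clcls q (n*m) k (gen (Psi (a + (j-1)*n)))) = tcls q n m k (tens_fr n j * gen (j, Psi a))"
    and "Gamma_inv (clcls q (n*m) k (gen (PsiS (a + (j-1)*n)))) = tcls q n m k (tens_fr n j * gen (j, PsiS a))"
    and "Gamma_inv (clcls q (n*m) k (gen (Om (a + (j-1)*n)))) = tcls q n m k (gen (j, Om a))"
  using assms block_offset_le[of j m a n] block_shift[of a n j] by (simp_all add: Gamma_inv_clcls)

lemma Gamma_ring_iso: "Gamma \<in> ring_iso (Tens q n m k) (Cl q (n*m) k)"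
  unfolding Gamma_def Tens_def Cl_def
  by (rule induced_map_ring_iso[OF presentation_hom_gamma presentation_hom_gamma_inv
        gamma_inv_gamma_gen gamma_gamma_inv_gen])

lemma Gamma_inv_ring_iso: "Gamma_inv \<in> ring_iso (Cl q (n*m) k) (Tens q n m k)"
  unfolding Gamma_inv_def Tens_def Cl_def
  by (rule induced_map_ring_iso[OF presentation_hom_gamma_inv presentation_hom_gamma
        gamma_gamma_inv_gen gamma_inv_gamma_gen])

lemma Gamma_inv_Gamma: "x \<in> carrier (Tens q n m k) \<Longrightarrow> Gamma_inv (Gamma x) = x"
  unfolding Gamma_def Gamma_inv_def Tens_def
  by (rule induced_map_inverse[OF presentation_hom_gamma presentation_hom_gamma_inv gamma_inv_gamma_gen])

lemma Gamma_Gamma_inv: "y \<in> carrier (Cl q (n*m) k) \<Longrightarrow> Gamma (Gamma_inv y) = y"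
  unfolding Gamma_def Gamma_inv_def Cl_def
  by (rule induced_map_inverse[OF presentation_hom_gamma_inv presentation_hom_gamma gamma_gamma_inv_gen])

lemma Gamma_graded: "graded_map (tgens n m) (t_rels q n m k) (tdeg n) (cgens (n*m)) (cl_rels q (n*m) k) cdeg Gamma"
  unfolding graded_map_def
proof (intro allI impI)
  fix d and p :: "(nat \<times> cgen,'k) fa" assume p: "p \<in> fcarrier (tgens n m) \<and> homog (tdeg n) d p"
  then show "\<exists>p'. p' \<in> fcarrier (cgens (n*m)) \<and> homog cdeg d p' \<and>
      Gamma (cls (tgens n m) (t_rels q n m k) p) = cls (cgens (n*m)) (cl_rels q (n*m) k) p'"
    using Gamma_tcls[of p] unfolding tcls_def clcls_def
    by (intro exI[of _ "free_hom (gamma_gen n) p"])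
       (auto intro: presentation_hom.free_hom_carrier[OF presentation_hom_gamma] homog_free_hom[OF homog_gamma_gen])
qed

lemma Gamma_same_factor_mult:
  assumes "j \<in> {1..m}" "a \<in> {1..n}" "b \<in> {1..n}" "P \<in> {Psi, PsiS}" "Q \<in> {Psi, PsiS}"
  shows "Gamma (tcls q n m k (gen (j, P a) * gen (j, Q b))) =
    clcls q (n*m) k (gen (P (a + (j-1)*n)) * gen (Q (b + (j-1)*n)))"
proof -
  have ab: "a + (j-1)*n \<le> n*m" "(j-1)*n < a + (j-1)*n" "b + (j-1)*n \<le> n*m" "(j-1)*n < b + (j-1)*n"
    using assms block_offset_le[of j m a n] block_offset_le[of j m b n] by auto
  have rel: "rel_cong (cl_rels q (n*m) k) (free_hom (gamma_gen n) (gen (j, P a) * gen (j, Q b)))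
      (gen (P (a + (j-1)*n)) * gen (Q (b + (j-1)*n)))"
    using assms(4,5) CL.twisted_fermions_mult[OF ab(2,1,4,3)]
    by (auto simp: free_hom_mult fr_eq_fprod)
  have carrier: "gen (j, P a) * gen (j, Q b) \<in> fcarrier (tgens n m)"
    "free_hom (gamma_gen n) (gen (j, P a) * gen (j, Q b)) \<in> fcarrier (cgens (n*m))"
    "gen (P (a + (j-1)*n)) * gen (Q (b + (j-1)*n)) \<in> fcarrier (cgens (n*m))"
    using assms ab by (auto intro!: fcarrier_mult fcarrier_gen gamma_gen_carrier simp: free_hom_mult)
  show ?thesis
    unfolding Gamma_tcls[OF carrier(1)] clcls_def
    using cls_eq_iff[OF cl_rels_carrier[of q "n*m" k] carrier(2,3)] rel by simp
qed

end

theorem theorem3p10: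
  fixes q :: "'k::field" and n m k :: nat
  assumes "(2::'k) \<noteq> 0" and "q \<noteq> 0" and "0 < n" and "0 < m" and "0 < k"
  shows "\<exists>\<Gamma> \<Gamma>'.
     \<Gamma> \<in> ring_iso (Tens q n m k) (Cl q (n*m) k)
   \<and> \<Gamma>' \<in> ring_iso (Cl q (n*m) k) (Tens q n m k)
   \<and> (\<forall>x\<in>carrier (Tens q n m k). \<Gamma>' (\<Gamma> x) = x)
   \<and> (\<forall>y\<in>carrier (Cl q (n*m) k). \<Gamma> (\<Gamma>' y) = y)
   \<and> (\<forall>c. \<Gamma> (tcls q n m k (scal c)) = clcls q (n*m) k (scal c))
   \<and> graded_map (tgens n m) (t_rels q n m k) (tdeg n) (cgens (n*m)) (cl_rels q (n*m) k) cdeg \<Gamma>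
   \<and> (\<forall>j\<in>{1..m}. \<forall>a\<in>{1..n}.
        \<Gamma> (tcls q n m k (gen (j, Psi a))) = clcls q (n*m) k (fr ((j-1)*n) * gen (Psi (a+(j-1)*n)))
      \<and> \<Gamma> (tcls q n m k (gen (j, PsiS a))) = clcls q (n*m) k (fr ((j-1)*n) * gen (PsiS (a+(j-1)*n)))
      \<and> \<Gamma> (tcls q n m k (gen (j, Om a))) = clcls q (n*m) k (gen (Om (a+(j-1)*n))))
   \<and> (\<forall>j\<in>{1..m}. \<forall>a\<in>{1..n}.
        \<Gamma>' (clcls q (n*m) k (gen (Psi (a+(j-1)*n)))) =
          tcls q n m k (prod_list (map (\<lambda>l. in_factor l (fr n)) [1..<j]) * gen (j, Psi a))
      \<and> \<Gamma>' (clcls q (n*m) k (gen (PsiS (a+(j-1)*n)))) =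
          tcls q n m k (prod_list (map (\<lambda>l. in_factor l (fr n)) [1..<j]) * gen (j, PsiS a))
      \<and> \<Gamma>' (clcls q (n*m) k (gen (Om (a+(j-1)*n)))) = tcls q n m k (gen (j, Om a)))
   \<and> (\<forall>j\<in>{1..m}. \<forall>a\<in>{1..n}. \<forall>b\<in>{1..n}. \<forall>P\<in>{Psi, PsiS}. \<forall>Q\<in>{Psi, PsiS}.
        \<Gamma> (tcls q n m k (gen (j, P a) * gen (j, Q b))) =
          clcls q (n*m) k (gen (P (a+(j-1)*n)) * gen (Q (b+(j-1)*n))))"
proof -
  interpret tensor_clifford q n m k
    using assms(1,2) by unfold_locales
  show ?thesis
    by (intro exI[of _ Gamma] exI[of _ Gamma_inv] conjI ballI allI)
      (use Gamma_ring_iso Gamma_inv_ring_iso Gamma_inv_Gamma Gamma_Gamma_inv Gamma_graded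
         Gamma_same_factor_mult Gamma_tcls[OF fcarrier_scal] in
       \<open>auto simp: Gamma_tcls_gen Gamma_inv_clcls_gen[simplified] tens_fr_def\<close>)
qed

end
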